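(* In the social learning model with Gaussian signals of variance $\sigma^2>0$, conditioned on $\theta=+1$, $$\lim_{t\to\infty}\frac{\ell_t}{(2\sqrt{2}/\sigma)\sqrt{\log t}}=1$$ with probability $1$.
   Context: Social learning model. A state $\theta\in\{-1,+1\}$ is drawn with $\mathbb{P}(\theta=+1)=\mathbb{P}(\theta=-1)=1/2$. Agents $t=1,2,\dots$ receive private signals $s_t\in\mathbb{R}$ that are i.i.d. conditionally on $\theta$, with CDF $F_+$ if $\theta=+1$ and $F_-$ if $\theta=-1$; $F_+$ and $F_-$ are mutually absolutely continuous. Let $L_t=\log\frac{\mathbb{P}(\theta=+1\mid s_t)}{\mathbb{P}(\theta=-1\mid s_t)}$ be the private log-likelihood ratio, and let $G_+$, $G_-$ denote the CDFs of $L_t$ conditional on $\theta=+1$, $\theta=-1$ respectively. Signals are assumed unbounded: for every $M\in\mathbb{R}$, $\mathbb{P}(L_t>M)>0$ and $\mathbb{P}(L_t<-M)>0$. Agent $t$ observes $a_1,\dots,a_{t-1}$ and her own signal and chooses $a_t\in\{-1,+1\}$ (utility $1$ if $a_t=\theta$, else $0$). The public belief is $\mu_t=\mathbb{P}(\theta=+1\mid a_1,\dots,a_{t-1})$ and $\ell_t=\log\frac{\mu_t}{1-\mu_t}$ (so $\ell_1=0$). In equilibrium $a_t=+1$ iff $\ell_t+L_t>0$, and otherwise $a_t=-1$. Consequently $\ell_{t+1}=\ell_t+D_+(\ell_t)$ if $a_t=+1$ and $\ell_{t+1}=\ell_t+D_-(\ell_t)$ if $a_t=-1$, where $D_+(x)=\log\frac{1-G_+(-x)}{1-G_-(-x)}$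 and $D_-(x)=\log\frac{G_+(-x)}{G_-(-x)}$. We write $\mathbb{P}_+(\cdot)=\mathbb{P}(\cdot\mid\theta=+1)$ and $\mathbb{E}_+$ for the corresponding expectation. Gaussian signals: $F_+$ is the normal distribution with mean $+1$ and variance $\sigma^2$, and $F_-$ is the normal distribution with mean $-1$ and variance $\sigma^2$. *)

theory Defs
  imports "HOL-Probability.Probability"
begin

definition sig_density :: "real \<Rightarrow> int \<Rightarrow> real \<Rightarrow> real" where
  "sig_density \<sigma> \<theta> x = normal_density (real_of_int \<theta>) \<sigma> x"

definition post_plus :: "real \<Rightarrow> real \<Rightarrow> real" where
  "post_plus \<sigma> x = (1/2 * sig_density \<sigma> 1 x) /
      (1/2 * sig_density \<sigma> 1 x + 1/2 * sig_density \<sigma> (-1) x)"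

definition private_llr :: "real \<Rightarrow> real \<Rightarrow> real" where
  "private_llr \<sigma> x = ln (post_plus \<sigma> x / (1 - post_plus \<sigma> x))"

definition sig_dist :: "real \<Rightarrow> int \<Rightarrow> real measure" where
  "sig_dist \<sigma> \<theta> = density lborel (\<lambda>x. ennreal (sig_density \<sigma> \<theta> x))"

definition G :: "real \<Rightarrow> int \<Rightarrow> real \<Rightarrow> real" where
  "G \<sigma> \<theta> y = measure (sig_dist \<sigma> \<theta>) {x. private_llr \<sigma> x \<le> y}"

definition D_plus :: "real \<Rightarrow> real \<Rightarrow> real" where
  "D_plus \<sigma> x = ln ((1 - G \<sigma> 1 (-x)) / (1 - G \<sigma> (-1) (-x)))"

definition D_minus :: "real \<Rightarrow> real \<Rightarrow> real" where
  "D_minus \<sigma> x = ln (G \<sigma> 1 (-x) / G \<sigma> (-1) (-x))"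

definition action :: "real \<Rightarrow> real \<Rightarrow> real \<Rightarrow> int" where
  "action \<sigma> l x = (if l + private_llr \<sigma> x > 0 then 1 else -1)"

definition llr_update :: "real \<Rightarrow> real \<Rightarrow> int \<Rightarrow> real" where
  "llr_update \<sigma> l a = (if a = 1 then l + D_plus \<sigma> l else l + D_minus \<sigma> l)"

text \<open>ell_aux n = public LLR of agent n+1, where agent t receives signal s (t-1).\<close>
primrec ell_aux :: "real \<Rightarrow> (nat \<Rightarrow> real) \<Rightarrow> nat \<Rightarrow> real" where
  "ell_aux \<sigma> sig 0 = 0"
| "ell_aux \<sigma> sig (Suc n) =
     llr_update \<sigma> (ell_aux \<sigma> sig n) (action \<sigma> (ell_aux \<sigma> sig n) (sig n))"

text \<open>Public LLR ell_t for t >= 1 (ell_1 = 0); signal of agent t is s (t - 1).\<close>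
definition public_llr :: "real \<Rightarrow> (nat \<Rightarrow> real) \<Rightarrow> nat \<Rightarrow> real" where
  "public_llr \<sigma> sig t = ell_aux \<sigma> sig (t - 1)"

end

theory Submission
  imports Defs "HOL-Real_Asymp.Real_Asymp"
begin

text \<open>Conditionally on \<open>\<theta> = +1\<close>, the public log-likelihood ratio \<open>l\<close> moves by \<open>D\<^sub>+(l) > 0\<close>
  after a correct action and by \<open>D\<^sub>-(l)\<close> after a wrong one. The process \<open>exp (-l/2)\<close> is a
  supermartingale: its expected one-step factor is the Bhattacharyya coefficient of the two action
  distributions, which stays below \<open>1\<close> by a multiple of the probability of a wrong action as long as
  \<open>l > -K\<close>. Hence \<open>l\<close> is bounded below almost surely and the probabilities of wrong actions are
  summable, so by Borel--Cantelli only finitely many agents err. From then on \<open>l\<close> follows the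
  deterministic recursion \<open>x\<^sub>n\<^sub>+\<^sub>1 = x\<^sub>n + D\<^sub>+(x\<^sub>n)\<close>, and the Gaussian tail
  \<open>D\<^sub>+(x) = exp (-\<sigma>\<^sup>2x\<^sup>2/8 + O(x))\<close> forces \<open>x\<^sub>n\<^sup>2 / ln n \<longrightarrow> 8/\<sigma>\<^sup>2\<close>.\<close>

section \<open>Drift recursions with Gaussian tails\<close>

lemma mult_exp_sq_increment_ge:
  fixes a z d :: real
  assumes "0 < a" "0 \<le> z" "0 < d" "exp (-a * z\<^sup>2) \<le> d"
  shows "z * exp (a * z\<^sup>2) + 1 \<le> (z + d) * exp (a * (z + d)\<^sup>2)"
proof -
  have "exp (a * z\<^sup>2) \<le> exp (a * (z + d)\<^sup>2)" using assms by (simp add: power_mono)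
  then have "(z + d) * exp (a * z\<^sup>2) \<le> (z + d) * exp (a * (z + d)\<^sup>2)"
    using assms by (intro mult_left_mono) auto
  moreover have "1 \<le> d * exp (a * z\<^sup>2)"
    using mult_right_mono[OF assms(4), of "exp (a * z\<^sup>2)"] by (simp add: exp_minus field_simps)
  ultimately show ?thesis by (simp add: algebra_simps)
qed

lemma mult_exp_sq_le_exp_sq:
  fixes a a' z :: real
  assumes "a < a'" "0 \<le> z" "1 / (a' - a) \<le> z"
  shows "z * exp (a * z\<^sup>2) \<le> exp (a' * z\<^sup>2)"
proof -
  have "1 \<le> (a' - a) * z" using assms by (simp add: field_simps)
  then have "z * 1 \<le> z * ((a' - a) * z)" using assms by (intro mult_left_mono) auto
  then have "z \<le> (a' - a) * z\<^sup>2" by (simp add: power2_eq_square algebra_simps)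
  also have "\<dots> \<le> exp ((a' - a) * z\<^sup>2)" by (smt (verit) exp_ge_add_one_self)
  finally have "z * exp (a * z\<^sup>2) \<le> exp ((a' - a) * z\<^sup>2) * exp (a * z\<^sup>2)"
    by (intro mult_right_mono) auto
  also have "\<dots> = exp (a' * z\<^sup>2)" by (simp add: exp_add[symmetric] algebra_simps)
  finally show ?thesis .
qed

lemma exp_sq_increment_le:
  fixes b b' z d :: real
  assumes b: "0 < b" "b < b'" and z: "0 \<le> z" and d: "0 < d" "d \<le> exp (-b' * z\<^sup>2)"
    and small: "b * (2 * z + 1) * exp (-b' * z\<^sup>2) < 1 / 2"
      "2 * b * (2 * z + 1) * exp (-(b' - b) * z\<^sup>2) < 1"
  shows "exp (b * (z + d)\<^sup>2) \<le> exp (b * z\<^sup>2) + 1"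
proof -
  have "exp (-b' * z\<^sup>2) \<le> 1" using b by simp
  with d have "d * d \<le> 1 * d" by (intro mult_right_mono) linarith+
  then have "2 * z * d + d\<^sup>2 \<le> (2 * z + 1) * d" by (simp add: power2_eq_square algebra_simps)
  also have "\<dots> \<le> (2 * z + 1) * exp (-b' * z\<^sup>2)" using z d by (intro mult_left_mono) auto
  finally have quad: "2 * z * d + d\<^sup>2 \<le> (2 * z + 1) * exp (-b' * z\<^sup>2)" .
  define w where "w = b * (2 * z * d + d\<^sup>2)"
  from quad have w_le: "w \<le> b * (2 * z + 1) * exp (-b' * z\<^sup>2)"
    unfolding w_def using b by (simp add: mult_left_mono)
  have w0: "0 \<le> w" unfolding w_def using b z d by simp
  have "exp (b * (z + d)\<^sup>2) = exp (b * z\<^sup>2) * exp w"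
    unfolding w_def by (simp add: exp_add[symmetric] power2_eq_square algebra_simps)
  also have "\<dots> \<le> exp (b * z\<^sup>2) * (1 + 2 * w)"
    using real_exp_bound_lemma[OF w0] w_le small by simp
  also have "\<dots> = exp (b * z\<^sup>2) + 2 * w * exp (b * z\<^sup>2)" by (simp add: algebra_simps)
  also have "2 * w * exp (b * z\<^sup>2) \<le> 2 * (b * (2 * z + 1) * exp (-b' * z\<^sup>2)) * exp (b * z\<^sup>2)"
    using w_le by simp
  also have "\<dots> = 2 * b * (2 * z + 1) * exp (-(b' - b) * z\<^sup>2)"
    by (simp add: exp_add[symmetric] algebra_simps)
  also have "\<dots> \<le> 1" using small by simp
  finally show ?thesis by simp
qed

lemma eventually_poly_exp_sq_small:
  fixes b b' :: real
  assumes "0 < b" "b < b'"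
  shows "eventually (\<lambda>z. b * (2 * z + 1) * exp (-b' * z\<^sup>2) < 1 / 2
    \<and> 2 * b * (2 * z + 1) * exp (-(b' - b) * z\<^sup>2) < 1) at_top"
proof -
  have small: "((\<lambda>z::real. \<beta> * (2 * z + 1) * exp (-\<gamma> * z\<^sup>2)) \<longlongrightarrow> 0) at_top"
    if "\<beta> > 0" "\<gamma> > 0" for \<beta> \<gamma> :: real
    using that by real_asymp
  show ?thesis
    using order_tendstoD(2)[OF small[of b b'], of "1/2"] order_tendstoD(2)[OF small[of "2 * b" "b' - b"], of 1]
      assms by (intro eventually_conj) auto
qed

lemma drift_recursion_mono:
  fixes x :: "nat \<Rightarrow> real"
  assumes pos: "\<And>z. D z > 0" and rec: "\<And>n. n \<ge> T \<Longrightarrow> x (Suc n) = x n + D (x n)"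
    and "T \<le> m" "m \<le> n"
  shows "x m \<le> x n"
  using \<open>m \<le> n\<close>
proof (induction n rule: dec_induct)
  case (step n)
  then show ?case using rec[of n] pos[of "x n"] \<open>T \<le> m\<close> by simp
qed simp

lemma drift_recursion_tendsto_at_top:
  fixes x :: "nat \<Rightarrow> real"
  assumes pos: "\<And>z. D z > 0" and local_lower: "\<And>R. \<exists>\<delta>>0. \<forall>z. \<bar>z\<bar> \<le> R \<longrightarrow> \<delta> \<le> D z"
    and rec: "\<And>n. n \<ge> T \<Longrightarrow> x (Suc n) = x n + D (x n)"
  shows "filterlim x at_top sequentially"
  unfolding filterlim_at_top
proof
  fix B :: real
  have mono: "\<And>m n. T \<le> m \<Longrightarrow> m \<le> n \<Longrightarrow> x m \<le> x n"
    using drift_recursion_mono[of D T x] pos rec by blast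
  show "eventually (\<lambda>n. B \<le> x n) sequentially"
  proof (cases "\<exists>n\<ge>T. B \<le> x n")
    case True
    then obtain n0 where "n0 \<ge> T" "B \<le> x n0" by auto
    then show ?thesis unfolding eventually_sequentially using mono by (meson order_trans)
  next
    case False
    then have below: "\<And>n. n \<ge> T \<Longrightarrow> x n < B" by (meson not_le)
    obtain \<delta> where \<delta>: "\<delta> > 0" "\<And>z. \<bar>z\<bar> \<le> \<bar>x T\<bar> + \<bar>B\<bar> \<Longrightarrow> \<delta> \<le> D z"
      using local_lower by blast
    have bounded: "\<bar>x n\<bar> \<le> \<bar>x T\<bar> + \<bar>B\<bar>" if "n \<ge> T" for n
      using mono[OF order_refl that] below[OF that] by auto
    have linear: "x T + real k * \<delta> \<le> x (T + k)" for k
    proof (induction k)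
      case (Suc k)
      have "\<delta> \<le> D (x (T + k))" using bounded[of "T + k"] \<delta>(2) by simp
      then show ?case using Suc rec[of "T + k"] by (simp add: algebra_simps)
    qed simp
    obtain k where "B - x T < real k * \<delta>" using ex_less_of_nat_mult[OF \<delta>(1)] by blast
    with linear[of k] below[of "T + k"] show ?thesis by simp
  qed
qed

text \<open>\<open>\<psi> z = z exp (a z\<^sup>2)\<close> grows by at least one per step, so
  \<open>exp (a' x\<^sub>n\<^sup>2) \<ge> \<psi> (x\<^sub>n) \<ge> n - N\<close>.\<close>

lemma drift_recursion_sq_ln_lower:
  fixes x :: "nat \<Rightarrow> real"
  assumes pos: "\<And>z. D z > 0" and rec: "\<And>n. n \<ge> T \<Longrightarrow> x (Suc n) = x n + D (x n)"
    and lim: "filterlim x at_top sequentially"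
    and a: "0 < a" "a < a'" and tail: "eventually (\<lambda>z. exp (-a * z\<^sup>2) \<le> D z) at_top"
    and L: "L < 1 / a'"
  shows "eventually (\<lambda>n. L < (x n)\<^sup>2 / ln (real n)) sequentially"
proof -
  have "eventually (\<lambda>n. exp (-a * (x n)\<^sup>2) \<le> D (x n) \<and> 1 / (a' - a) \<le> x n \<and> 0 \<le> x n \<and> T \<le> n)
      sequentially"
    using filterlim_iff[THEN iffD1, OF lim, rule_format, OF tail] lim eventually_ge_at_top[of T]
    by (intro eventually_conj) (auto simp: filterlim_at_top)
  then obtain N where N: "\<And>n. n \<ge> N \<Longrightarrow>
      exp (-a * (x n)\<^sup>2) \<le> D (x n) \<and> 1 / (a' - a) \<le> x n \<and> 0 \<le> x n \<and> T \<le> n"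
    unfolding eventually_sequentially by blast
  define \<psi> where "\<psi> z = z * exp (a * z\<^sup>2)" for z
  have step: "\<psi> (x n) + 1 \<le> \<psi> (x (Suc n))" if "n \<ge> N" for n
    using N[OF that] rec[of n] pos[of "x n"] a(1) unfolding \<psi>_def
    by (auto intro!: mult_exp_sq_increment_ge)
  have growth: "real k \<le> \<psi> (x (N + k))" for k
  proof (induction k)
    case 0 show ?case using N[of N] by (simp add: \<psi>_def)
  next
    case (Suc k) then show ?case using step[of "N + k"] by simp
  qed
  have bound: "ln (real n - real N) \<le> a' * (x n)\<^sup>2" if "n > N" for n
  proof -
    have "real n - real N \<le> \<psi> (x n)" using growth[of "n - N"] that by simp
    also have "\<dots> \<le> exp (a' * (x n)\<^sup>2)"
      unfolding \<psi>_def using N[of n] that a by (intro mult_exp_sq_le_exp_sq) auto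
    finally have "ln (real n - real N) \<le> ln (exp (a' * (x n)\<^sup>2))" using that by (intro ln_mono) auto
    then show ?thesis by simp
  qed
  have "((\<lambda>n. ln (real n - real N) / ln (real n) * (1 / a')) \<longlongrightarrow> 1 * (1 / a')) sequentially"
    by (intro tendsto_intros) real_asymp
  then have "eventually (\<lambda>n. L < ln (real n - real N) / ln (real n) * (1 / a')) sequentially"
    using L by (auto dest: order_tendstoD)
  then show ?thesis
    using eventually_gt_at_top[of N] eventually_gt_at_top[of 1]
  proof eventually_elim
    case (elim n)
    have "ln (real n - real N) / ln (real n) * (1 / a') \<le> (x n)\<^sup>2 / ln (real n)"
      using bound[OF elim(2)] elim(3) a by (simp add: field_simps)
    with elim(1) show ?case by simp
  qed
qed

text \<open>\<open>exp (b x\<^sub>n\<^sup>2)\<close> grows by at most one per step.\<close>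

lemma drift_recursion_sq_ln_upper:
  fixes x :: "nat \<Rightarrow> real"
  assumes pos: "\<And>z. D z > 0" and rec: "\<And>n. n \<ge> T \<Longrightarrow> x (Suc n) = x n + D (x n)"
    and lim: "filterlim x at_top sequentially"
    and b: "0 < b" "b < b'" and tail: "eventually (\<lambda>z. D z \<le> exp (-b' * z\<^sup>2)) at_top"
    and U: "1 / b < U"
  shows "eventually (\<lambda>n. (x n)\<^sup>2 / ln (real n) < U) sequentially"
proof -
  have ev: "eventually (\<lambda>z. D z \<le> exp (-b' * z\<^sup>2) \<and> b * (2 * z + 1) * exp (-b' * z\<^sup>2) < 1 / 2
      \<and> 2 * b * (2 * z + 1) * exp (-(b' - b) * z\<^sup>2) < 1 \<and> 0 \<le> z) at_top"
    using tail eventually_poly_exp_sq_small[OF b] eventually_ge_at_top[of 0]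
    by (intro eventually_conj) (auto elim: eventually_mono)
  obtain N where N: "\<And>n. n \<ge> N \<Longrightarrow> (D (x n) \<le> exp (-b' * (x n)\<^sup>2)
      \<and> b * (2 * x n + 1) * exp (-b' * (x n)\<^sup>2) < 1 / 2
      \<and> 2 * b * (2 * x n + 1) * exp (-(b' - b) * (x n)\<^sup>2) < 1 \<and> 0 \<le> x n) \<and> T \<le> n"
    using eventually_conj[OF filterlim_iff[THEN iffD1, OF lim, rule_format, OF ev]
        eventually_ge_at_top[of T]]
    unfolding eventually_sequentially by blast
  have step: "exp (b * (x (Suc n))\<^sup>2) \<le> exp (b * (x n)\<^sup>2) + 1" if "n \<ge> N" for n
    using N[OF that] rec[of n] pos[of "x n"] exp_sq_increment_le[OF b, of "x n" "D (x n)"] by auto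
  define C where "C = exp (b * (x N)\<^sup>2)"
  have growth: "exp (b * (x (N + k))\<^sup>2) \<le> C + real k" for k
  proof (induction k)
    case 0 show ?case by (simp add: C_def)
  next
    case (Suc k) then show ?case using step[of "N + k"] by simp
  qed
  have bound: "b * (x n)\<^sup>2 \<le> ln (C + real n)" if "n \<ge> N" for n
  proof -
    have "exp (b * (x n)\<^sup>2) \<le> C + real n" using growth[of "n - N"] that by simp
    then have "ln (exp (b * (x n)\<^sup>2)) \<le> ln (C + real n)" by (intro ln_mono) auto
    then show ?thesis by simp
  qed
  have "((\<lambda>n. ln (C + real n) / ln (real n) * (1 / b)) \<longlongrightarrow> 1 * (1 / b)) sequentially"
    by (intro tendsto_intros) real_asymp
  then have "eventually (\<lambda>n. ln (C + real n) / ln (real n) * (1 / b) < U) sequentially"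
    using U by (auto dest: order_tendstoD)
  then show ?thesis
    using eventually_ge_at_top[of N] eventually_gt_at_top[of 1]
  proof eventually_elim
    case (elim n)
    have "(x n)\<^sup>2 / ln (real n) \<le> ln (C + real n) / ln (real n) * (1 / b)"
      using bound[OF elim(2)] elim(3) b by (simp add: field_simps)
    with elim(1) show ?case by simp
  qed
qed

lemma drift_recursion_sq_over_ln_tendsto:
  fixes x :: "nat \<Rightarrow> real"
  assumes c: "c > 0" and pos: "\<And>z. D z > 0" and lim: "filterlim x at_top sequentially"
    and lower_tail: "\<And>a. c < a \<Longrightarrow> eventually (\<lambda>z. exp (-a * z\<^sup>2) \<le> D z) at_top"
    and upper_tail: "\<And>b. b < c \<Longrightarrow> eventually (\<lambda>z. D z \<le> exp (-b * z\<^sup>2)) at_top"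
    and rec: "\<And>n. n \<ge> T \<Longrightarrow> x (Suc n) = x n + D (x n)"
  shows "(\<lambda>n. (x n)\<^sup>2 / ln (real n)) \<longlonglongrightarrow> 1 / c"
proof (rule order_tendstoI)
  fix L assume L: "L < 1 / c"
  show "eventually (\<lambda>n. L < (x n)\<^sup>2 / ln (real n)) sequentially"
  proof (cases "L > 0")
    case True
    then obtain a' where a': "c < a'" "a' < 1 / L"
      using dense L c by (metis divide_less_eq_1 less_divide_eq mult.commute)
    then obtain a where "c < a" "a < a'" using dense by blast
    moreover have "L < 1 / a'" using a' c True by (simp add: field_simps)
    ultimately show ?thesis
      using c by (intro drift_recursion_sq_ln_lower[OF pos rec lim _ _ lower_tail]) auto
  next
    case False
    have "eventually (\<lambda>n. 0 < x n) sequentially" using lim by (simp add: filterlim_at_top_dense)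
    then show ?thesis using eventually_gt_at_top[of 1]
    proof eventually_elim
      case (elim n)
      then have "0 < (x n)\<^sup>2 / ln (real n)" by simp
      with False show ?case by linarith
    qed
  qed
next
  fix U assume U: "1 / c < U"
  have U0: "0 < U" using U c by (smt (verit) divide_pos_pos zero_less_one)
  with U have "1 / U < c" using c by (simp add: field_simps)
  then obtain b where b: "1 / U < b" "b < c" using dense by blast
  then obtain b' where "b < b'" "b' < c" using dense by blast
  moreover have "0 < b" using b U0 by (smt (verit) divide_pos_pos zero_less_one)
  moreover from this have "1 / b < U" using b U0 by (simp add: field_simps)
  ultimately show "eventually (\<lambda>n. (x n)\<^sup>2 / ln (real n) < U) sequentially"
    by (intro drift_recursion_sq_ln_upper[OF pos rec lim _ _ upper_tail]) auto
qed

theorem drift_recursion_asymptotics: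
  fixes x :: "nat \<Rightarrow> real"
  assumes c: "c > 0" and pos: "\<And>z. D z > 0"
    and local_lower: "\<And>R. \<exists>\<delta>>0. \<forall>z. \<bar>z\<bar> \<le> R \<longrightarrow> \<delta> \<le> D z"
    and lower_tail: "\<And>a. c < a \<Longrightarrow> eventually (\<lambda>z. exp (-a * z\<^sup>2) \<le> D z) at_top"
    and upper_tail: "\<And>b. b < c \<Longrightarrow> eventually (\<lambda>z. D z \<le> exp (-b * z\<^sup>2)) at_top"
    and rec: "\<And>n. n \<ge> T \<Longrightarrow> x (Suc n) = x n + D (x n)"
  shows "(\<lambda>n. x n / sqrt (ln (real n))) \<longlonglongrightarrow> 1 / sqrt c"
proof -
  have lim: "filterlim x at_top sequentially"
    using pos local_lower rec by (rule drift_recursion_tendsto_at_top)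
  have "(\<lambda>n. sqrt ((x n)\<^sup>2 / ln (real n))) \<longlonglongrightarrow> sqrt (1 / c)"
    by (intro tendsto_real_sqrt drift_recursion_sq_over_ln_tendsto[OF c pos lim lower_tail upper_tail rec])
  moreover have "eventually (\<lambda>n. sqrt ((x n)\<^sup>2 / ln (real n)) = x n / sqrt (ln (real n))) sequentially"
    using lim unfolding filterlim_at_top_dense
    by (auto elim!: allE[of _ 0] eventually_mono simp: real_sqrt_divide)
  ultimately have "(\<lambda>n. x n / sqrt (ln (real n))) \<longlonglongrightarrow> sqrt (1 / c)"
    by (rule Lim_transform_eventually)
  then show ?thesis by (simp add: real_sqrt_divide)
qed

lemma tendsto_pred_index_sqrt_ln:
  fixes f :: "nat \<Rightarrow> real"
  assumes f: "(\<lambda>n. f n / sqrt (ln (real n))) \<longlonglongrightarrow> k" and k: "k \<noteq> 0"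
  shows "(\<lambda>t. f (t - 1) / (k * sqrt (ln (real t)))) \<longlonglongrightarrow> 1"
proof -
  have "(\<lambda>t. f (t - 1) / sqrt (ln (real (t - 1)))) \<longlonglongrightarrow> k"
    by (rule LIMSEQ_imp_Suc) (simp add: f)
  moreover have "((\<lambda>t::nat. sqrt (ln (real t - 1)) / sqrt (ln (real t))) \<longlongrightarrow> 1) at_top"
    by real_asymp
  ultimately have "(\<lambda>t. f (t - 1) / sqrt (ln (real (t - 1))) * (sqrt (ln (real t - 1)) / sqrt (ln (real t))) / k)
      \<longlonglongrightarrow> k * 1 / k"
    by (intro tendsto_intros k)
  moreover have "eventually (\<lambda>t. f (t - 1) / sqrt (ln (real (t - 1)))
      * (sqrt (ln (real t - 1)) / sqrt (ln (real t))) / k = f (t - 1) / (k * sqrt (ln (real t)))) sequentially"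
    using eventually_gt_at_top[of 2]
  proof eventually_elim
    case (elim t)
    then have "real (t - 1) = real t - 1" "ln (real t - 1) > 0" by auto
    then show ?case by (simp add: field_simps)
  qed
  ultimately show ?thesis using k by (simp add: tendsto_cong)
qed

section \<open>The Bhattacharyya coefficient\<close>

definition bhattacharyya :: "real \<Rightarrow> real \<Rightarrow> real" where
  "bhattacharyya p q = sqrt ((1 - p) * (1 - q)) + sqrt (p * q)"

lemma one_minus_bhattacharyya:
  assumes "0 \<le> p" "p \<le> 1" "0 \<le> q" "q \<le> 1"
  shows "1 - bhattacharyya p q = ((sqrt q - sqrt p)\<^sup>2 + (sqrt (1 - p) - sqrt (1 - q))\<^sup>2) / 2"
proof -
  have "(sqrt q - sqrt p)\<^sup>2 = q + p - 2 * sqrt (p * q)"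
    "(sqrt (1 - p) - sqrt (1 - q))\<^sup>2 = (1 - p) + (1 - q) - 2 * sqrt ((1 - p) * (1 - q))"
    using assms by (simp_all add: power2_diff real_sqrt_mult)
  then show ?thesis unfolding bhattacharyya_def by simp
qed

lemma bhattacharyya_gap_sqrt_ratio:
  assumes "0 \<le> p" "p \<le> 1" "0 \<le> q" "q \<le> 1" and ratio: "sqrt p \<le> 2 / 3 * sqrt q"
  shows "q / 18 \<le> 1 - bhattacharyya p q"
proof -
  have "sqrt q / 3 \<le> sqrt q - sqrt p" using ratio by simp
  then have "(sqrt q / 3)\<^sup>2 \<le> (sqrt q - sqrt p)\<^sup>2" using assms by (intro power_mono) auto
  then have "q / 9 \<le> (sqrt q - sqrt p)\<^sup>2" using assms by (simp add: power_divide)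
  then have "q / 9 + 0 \<le> (sqrt q - sqrt p)\<^sup>2 + (sqrt (1 - p) - sqrt (1 - q))\<^sup>2"
    by (rule add_mono) simp
  then show ?thesis using assms by (simp add: one_minus_bhattacharyya)
qed

lemma bhattacharyya_gap_diff:
  assumes "0 \<le> p" "p \<le> q" "q \<le> 1"
  shows "(q - p)\<^sup>2 / 8 \<le> 1 - bhattacharyya p q"
proof -
  define u where "u = sqrt (1 - p)"
  define w where "w = sqrt (1 - q)"
  have uw: "0 \<le> w" "w \<le> u" "u \<le> 1" using assms unfolding u_def w_def by auto
  have "(u - w) * (u + w) = q - p" using assms unfolding u_def w_def by (simp add: algebra_simps)
  moreover have "(u - w) * (u + w) \<le> (u - w) * 2" using uw by (intro mult_left_mono) auto
  ultimately have "(q - p) / 2 \<le> u - w" by simp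
  then have "((q - p) / 2)\<^sup>2 \<le> (u - w)\<^sup>2" using assms by (intro power_mono) auto
  then have "0 + ((q - p) / 2)\<^sup>2 \<le> (sqrt q - sqrt p)\<^sup>2 + (u - w)\<^sup>2" by (rule add_mono[rotated]) simp
  then show ?thesis using assms by (simp add: one_minus_bhattacharyya u_def w_def power_divide)
qed

lemma sqrt_exp: "sqrt (exp x) = exp (x / 2)"
  by (rule real_sqrt_unique) (simp_all add: power2_eq_square exp_add[symmetric])

lemma exp_neg_half_ln_div_mult:
  assumes "u > 0" "w > 0" shows "exp (-(ln (u / w)) / 2) * u = sqrt (u * w)"
proof -
  have "exp (-(ln (u / w)) / 2) = exp (ln (w / u) / 2)" using assms by (simp add: ln_div)
  also have "\<dots> = sqrt (w / u)" using assms by (simp add: sqrt_exp[symmetric])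
  also have "sqrt (w / u) * u = sqrt (u * w)"
    using assms by (simp add: real_sqrt_divide real_sqrt_mult field_simps)
  finally show ?thesis .
qed

section \<open>The normal distribution\<close>

abbreviation normal_distr :: "real \<Rightarrow> real \<Rightarrow> real measure" where
  "normal_distr \<mu> \<sigma> \<equiv> density lborel (\<lambda>x. ennreal (normal_density \<mu> \<sigma> x))"

definition normal_cdf :: "real \<Rightarrow> real \<Rightarrow> real" where
  "normal_cdf \<sigma> v = measure (normal_distr 0 \<sigma>) {..v}"

lemma prob_space_normal_distr: "\<sigma> > 0 \<Longrightarrow> prob_space (normal_distr \<mu> \<sigma>)"
  using prob_space_normal_density by simp

lemma measure_normal_distr_atMost: "measure (normal_distr \<mu> \<sigma>) {..v} = normal_cdf \<sigma> (v - \<mu>)"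
proof -
  have "emeasure (normal_distr \<mu> \<sigma>) {..v}
      = (\<integral>\<^sup>+x. ennreal (normal_density \<mu> \<sigma> x) * indicator {..v} x \<partial>lborel)"
    by (simp add: emeasure_density)
  also have "\<dots> = (\<integral>\<^sup>+x. ennreal (normal_density \<mu> \<sigma> (\<mu> + 1 * x)) * indicator {..v} (\<mu> + 1 * x) \<partial>lborel)"
    by (subst nn_integral_real_affine[where c=1 and t=\<mu>]) auto
  also have "\<dots> = (\<integral>\<^sup>+x. ennreal (normal_density 0 \<sigma> x) * indicator {..v - \<mu>} x \<partial>lborel)"
    by (intro nn_integral_cong) (auto simp: normal_density_def indicator_def)
  also have "\<dots> = emeasure (normal_distr 0 \<sigma>) {..v - \<mu>}"
    by (simp add: emeasure_density)
  finally show ?thesis unfolding normal_cdf_def measure_def by simp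
qed

lemma normal_density_le_abs_mono:
  assumes "\<sigma> > 0" "\<bar>y\<bar> \<le> \<bar>z\<bar>"
  shows "normal_density 0 \<sigma> z \<le> normal_density 0 \<sigma> y"
proof -
  have "y\<^sup>2 \<le> z\<^sup>2" using assms(2) by (metis abs_le_square_iff)
  then have "-z\<^sup>2 / (2 * \<sigma>\<^sup>2) \<le> -y\<^sup>2 / (2 * \<sigma>\<^sup>2)" using assms(1) by (simp add: divide_right_mono)
  then show ?thesis unfolding normal_density_def by (intro mult_left_mono) auto
qed

lemma normal_cdf_diff:
  assumes "\<sigma> > 0" "a \<le> b"
  shows "normal_cdf \<sigma> b - normal_cdf \<sigma> a = measure (normal_distr 0 \<sigma>) {a<..b}"
proof -
  interpret prob_space "normal_distr 0 \<sigma>" using assms(1) by (rule prob_space_normal_distr)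
  have "{a<..b} = {..b} - {..a}" by auto
  then show ?thesis unfolding normal_cdf_def using assms(2) by (simp add: finite_measure_Diff)
qed

lemma normal_cdf_diff_ge:
  assumes \<sigma>: "\<sigma> > 0" and "a \<le> b" "\<bar>a\<bar> \<le> R" "\<bar>b\<bar> \<le> R"
  shows "normal_density 0 \<sigma> R * (b - a) \<le> normal_cdf \<sigma> b - normal_cdf \<sigma> a"
proof -
  interpret prob_space "normal_distr 0 \<sigma>" using \<sigma> by (rule prob_space_normal_distr)
  define m where "m = normal_density 0 \<sigma> R"
  have "ennreal (m * (b - a)) = (\<integral>\<^sup>+x. ennreal m * indicator {a<..b} x \<partial>lborel)"
    using assms by (subst nn_integral_cmult_indicator) (auto simp: m_def ennreal_mult)
  also have "\<dots> \<le> (\<integral>\<^sup>+x. ennreal (normal_density 0 \<sigma> x) * indicator {a<..b} x \<partial>lborel)"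
    using assms unfolding m_def
    by (intro nn_integral_mono) (auto simp: indicator_def intro!: normal_density_le_abs_mono)
  also have "\<dots> = ennreal (measure (normal_distr 0 \<sigma>) {a<..b})"
    by (simp add: emeasure_density[symmetric] emeasure_eq_measure)
  finally have "ennreal (m * (b - a)) \<le> ennreal (measure (normal_distr 0 \<sigma>) {a<..b})" .
  then show ?thesis using assms by (simp add: ennreal_le_iff normal_cdf_diff m_def)
qed

lemma normal_cdf_diff_le:
  assumes \<sigma>: "\<sigma> > 0" and "a \<le> b" "b \<le> 0"
  shows "normal_cdf \<sigma> b - normal_cdf \<sigma> a \<le> normal_density 0 \<sigma> b * (b - a)"
proof -
  interpret prob_space "normal_distr 0 \<sigma>" using \<sigma> by (rule prob_space_normal_distr)
  define m where "m = normal_density 0 \<sigma> b"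
  have "ennreal (measure (normal_distr 0 \<sigma>) {a<..b})
      = (\<integral>\<^sup>+x. ennreal (normal_density 0 \<sigma> x) * indicator {a<..b} x \<partial>lborel)"
    by (simp add: emeasure_density[symmetric] emeasure_eq_measure)
  also have "\<dots> \<le> (\<integral>\<^sup>+x. ennreal m * indicator {a<..b} x \<partial>lborel)"
    using assms unfolding m_def
    by (intro nn_integral_mono) (auto simp: indicator_def intro!: normal_density_le_abs_mono)
  also have "\<dots> = ennreal (m * (b - a))"
    using assms by (subst nn_integral_cmult_indicator) (auto simp: m_def ennreal_mult)
  finally show ?thesis using assms by (simp add: normal_cdf_diff ennreal_le_iff m_def)
qed

lemma normal_cdf_mono: "\<sigma> > 0 \<Longrightarrow> a \<le> b \<Longrightarrow> normal_cdf \<sigma> a \<le> normal_cdf \<sigma> b"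
  using normal_cdf_diff_ge[of \<sigma> a b "\<bar>a\<bar> + \<bar>b\<bar>"] normal_density_nonneg[of 0 \<sigma> "\<bar>a\<bar> + \<bar>b\<bar>"]
  by (smt (verit) mult_nonneg_nonneg)

lemma normal_cdf_bounds:
  assumes \<sigma>: "\<sigma> > 0" shows "0 < normal_cdf \<sigma> a" "normal_cdf \<sigma> a < 1"
proof -
  interpret prob_space "normal_distr 0 \<sigma>" using \<sigma> by (rule prob_space_normal_distr)
  have pos: "normal_density 0 \<sigma> (\<bar>a\<bar> + 1) > 0" using \<sigma> by (rule normal_density_pos)
  have "normal_density 0 \<sigma> (\<bar>a\<bar> + 1) * (a - (a - 1)) \<le> normal_cdf \<sigma> a - normal_cdf \<sigma> (a - 1)"
    by (rule normal_cdf_diff_ge[OF \<sigma>]) auto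
  moreover have "normal_cdf \<sigma> (a - 1) \<ge> 0" unfolding normal_cdf_def by simp
  ultimately show "0 < normal_cdf \<sigma> a" using pos by simp
  have "normal_density 0 \<sigma> (\<bar>a\<bar> + 1) * ((a + 1) - a) \<le> normal_cdf \<sigma> (a + 1) - normal_cdf \<sigma> a"
    by (rule normal_cdf_diff_ge[OF \<sigma>]) auto
  moreover have "normal_cdf \<sigma> (a + 1) \<le> 1" unfolding normal_cdf_def by simp
  ultimately show "normal_cdf \<sigma> a < 1" using pos by simp
qed

lemma borel_measurable_normal_cdf[measurable]: "\<sigma> > 0 \<Longrightarrow> normal_cdf \<sigma> \<in> borel_measurable borel"
  by (rule borel_measurable_mono) (auto simp: mono_def intro: normal_cdf_mono)

section \<open>One step of Gaussian social learning\<close>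

definition signal_threshold :: "real \<Rightarrow> real \<Rightarrow> real" where
  "signal_threshold \<sigma> l = - l * \<sigma>\<^sup>2 / 2"

definition next_llr :: "real \<Rightarrow> real \<Rightarrow> real \<Rightarrow> real" where
  "next_llr \<sigma> l y = llr_update \<sigma> l (action \<sigma> l y)"

lemma private_llr_gaussian:
  assumes "\<sigma> > 0" shows "private_llr \<sigma> x = 2 * x / \<sigma>\<^sup>2"
proof -
  define a where "a = sig_density \<sigma> 1 x"
  define b where "b = sig_density \<sigma> (-1) x"
  have a: "a > 0" and b: "b > 0"
    using assms by (auto simp: a_def b_def sig_density_def normal_density_pos)
  have post: "post_plus \<sigma> x = a / (a + b)"
    unfolding post_plus_def a_def b_def by (simp add: field_simps)
  have "1 - a / (a + b) = b / (a + b)" using a b by (simp add: field_simps)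
  then have "post_plus \<sigma> x / (1 - post_plus \<sigma> x) = a / b"
    using a b unfolding post by (simp add: divide_simps)
  also have "a / b = exp (2 * x / \<sigma>\<^sup>2)"
    using assms unfolding a_def b_def sig_density_def normal_density_def
    by (simp add: exp_diff[symmetric] field_simps power2_eq_square)
  finally show ?thesis unfolding private_llr_def by simp
qed

lemma next_llr_gaussian:
  assumes "\<sigma> > 0"
  shows "next_llr \<sigma> l y =
    (if signal_threshold \<sigma> l < y then l + D_plus \<sigma> l else l + D_minus \<sigma> l)"
proof -
  have "(0 < l + 2 * y / \<sigma>\<^sup>2) = (signal_threshold \<sigma> l < y)"
    using assms unfolding signal_threshold_def by (simp add: field_simps) linarith
  then show ?thesis
    unfolding next_llr_def llr_update_def action_def using assms by (simp add: private_llr_gaussian)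
qed

lemma G_gaussian: "\<sigma> > 0 \<Longrightarrow> G \<sigma> \<theta> y = normal_cdf \<sigma> (y * \<sigma>\<^sup>2 / 2 - \<theta>)"
proof -
  assume "\<sigma> > 0"
  then have "{x. private_llr \<sigma> x \<le> y} = {..y * \<sigma>\<^sup>2 / 2}"
    by (auto simp: private_llr_gaussian field_simps)
  then show ?thesis
    unfolding G_def sig_dist_def sig_density_def by (simp add: measure_normal_distr_atMost)
qed

lemma G_plus_gaussian: "\<sigma> > 0 \<Longrightarrow> G \<sigma> 1 (-l) = normal_cdf \<sigma> (signal_threshold \<sigma> l - 1)"
  by (simp add: G_gaussian signal_threshold_def)

lemma G_minus_gaussian: "\<sigma> > 0 \<Longrightarrow> G \<sigma> (-1) (-l) = normal_cdf \<sigma> (signal_threshold \<sigma> l + 1)"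
  by (simp add: G_gaussian signal_threshold_def)

lemma G_bounds:
  assumes "\<sigma> > 0"
  shows "0 < G \<sigma> 1 (-l)" "G \<sigma> 1 (-l) < 1" "0 < G \<sigma> (-1) (-l)" "G \<sigma> (-1) (-l) < 1"
  using normal_cdf_bounds[OF assms] by (simp_all add: G_plus_gaussian G_minus_gaussian assms)

lemma G_minus_minus_G_plus_ge:
  assumes \<sigma>: "\<sigma> > 0"
  shows "2 * normal_density 0 \<sigma> (\<bar>l\<bar> * \<sigma>\<^sup>2 / 2 + 1) \<le> G \<sigma> (-1) (-l) - G \<sigma> 1 (-l)"
proof -
  define v where "v = signal_threshold \<sigma> l"
  have abs_v: "\<bar>l\<bar> * \<sigma>\<^sup>2 / 2 = \<bar>v\<bar>" unfolding v_def signal_threshold_def by (simp add: abs_mult)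
  moreover have "normal_density 0 \<sigma> (\<bar>v\<bar> + 1) * ((v + 1) - (v - 1))
      \<le> normal_cdf \<sigma> (v + 1) - normal_cdf \<sigma> (v - 1)"
    by (rule normal_cdf_diff_ge[OF \<sigma>]) auto
  ultimately show ?thesis
    unfolding G_plus_gaussian[OF \<sigma>] G_minus_gaussian[OF \<sigma>] v_def[symmetric] abs_v by simp
qed

lemma G_plus_le_exp_G_minus:
  assumes \<sigma>: "\<sigma> > 0"
  shows "G \<sigma> 1 (-l) \<le> exp (-l) * G \<sigma> (-1) (-l)"
proof -
  interpret P: prob_space "normal_distr (-1) \<sigma>" using \<sigma> by (rule prob_space_normal_distr)
  interpret Q: prob_space "normal_distr 1 \<sigma>" using \<sigma> by (rule prob_space_normal_distr)
  define v where "v = l * \<sigma>\<^sup>2 / 2"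
  have G_eq: "G \<sigma> \<theta> (-l) = measure (normal_distr \<theta> \<sigma>) {..-v}" for \<theta>
    using \<sigma> by (simp add: G_gaussian measure_normal_distr_atMost v_def)
  have ratio: "normal_density 1 \<sigma> y \<le> exp (-l) * normal_density (-1) \<sigma> y" if "y \<le> -v" for y
  proof -
    have "normal_density 1 \<sigma> y = exp (2 * y / \<sigma>\<^sup>2) * normal_density (-1) \<sigma> y"
      using \<sigma> unfolding normal_density_def by (simp add: exp_add[symmetric] field_simps power2_eq_square)
    also have "exp (2 * y / \<sigma>\<^sup>2) \<le> exp (-l)" using that \<sigma> unfolding v_def by (simp add: field_simps)
    finally show ?thesis by (simp add: mult_right_mono)
  qed
  have "ennreal (G \<sigma> 1 (-l)) = (\<integral>\<^sup>+y. ennreal (normal_density 1 \<sigma> y) * indicator {..-v} y \<partial>lborel)"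
    by (simp add: G_eq emeasure_density[symmetric] Q.emeasure_eq_measure)
  also have "\<dots> \<le> (\<integral>\<^sup>+y. ennreal (exp (-l)) * (ennreal (normal_density (-1) \<sigma> y) * indicator {..-v} y) \<partial>lborel)"
    using ratio by (intro nn_integral_mono) (auto simp: indicator_def ennreal_mult[symmetric])
  also have "\<dots> = ennreal (exp (-l) * G \<sigma> (-1) (-l))"
    by (simp add: nn_integral_cmult emeasure_density[symmetric] G_eq P.emeasure_eq_measure ennreal_mult)
  finally show ?thesis using G_bounds[OF \<sigma>, of l] by (simp add: ennreal_le_iff)
qed

lemma D_plus_gaussian:
  "\<sigma> > 0 \<Longrightarrow> D_plus \<sigma> l = ln ((1 - normal_cdf \<sigma> (signal_threshold \<sigma> l - 1))
      / (1 - normal_cdf \<sigma> (signal_threshold \<sigma> l + 1)))"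
  by (simp add: D_plus_def G_plus_gaussian G_minus_gaussian)

lemma D_minus_gaussian:
  "\<sigma> > 0 \<Longrightarrow> D_minus \<sigma> l = ln (normal_cdf \<sigma> (signal_threshold \<sigma> l - 1)
      / normal_cdf \<sigma> (signal_threshold \<sigma> l + 1))"
  by (simp add: D_minus_def G_plus_gaussian G_minus_gaussian)

lemma borel_measurable_D_plus:
  assumes "\<sigma> > 0" shows "D_plus \<sigma> \<in> borel_measurable borel"
proof -
  have "D_plus \<sigma> = (\<lambda>l. ln ((1 - normal_cdf \<sigma> (signal_threshold \<sigma> l - 1))
      / (1 - normal_cdf \<sigma> (signal_threshold \<sigma> l + 1))))"
    using assms by (simp add: D_plus_gaussian fun_eq_iff)
  also have "\<dots> \<in> borel_measurable borel" using assms unfolding signal_threshold_def by measurable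
  finally show ?thesis .
qed

lemma borel_measurable_D_minus:
  assumes "\<sigma> > 0" shows "D_minus \<sigma> \<in> borel_measurable borel"
proof -
  have "D_minus \<sigma> = (\<lambda>l. ln (normal_cdf \<sigma> (signal_threshold \<sigma> l - 1)
      / normal_cdf \<sigma> (signal_threshold \<sigma> l + 1)))"
    using assms by (simp add: D_minus_gaussian fun_eq_iff)
  also have "\<dots> \<in> borel_measurable borel" using assms unfolding signal_threshold_def by measurable
  finally show ?thesis .
qed

lemma borel_measurable_next_llr:
  assumes \<sigma>: "\<sigma> > 0" and [measurable]: "f \<in> borel_measurable N" "g \<in> borel_measurable N"
  shows "(\<lambda>x. next_llr \<sigma> (f x) (g x)) \<in> borel_measurable N"
proof -
  note [measurable] = borel_measurable_D_plus[OF \<sigma>] borel_measurable_D_minus[OF \<sigma>]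
  show ?thesis unfolding next_llr_gaussian[OF \<sigma>] signal_threshold_def by measurable
qed

lemma D_plus_ge:
  assumes \<sigma>: "\<sigma> > 0"
  shows "2 * normal_density 0 \<sigma> (\<bar>l\<bar> * \<sigma>\<^sup>2 / 2 + 1) \<le> D_plus \<sigma> l"
proof -
  define p where "p = G \<sigma> 1 (-l)"
  define q where "q = G \<sigma> (-1) (-l)"
  have gap: "2 * normal_density 0 \<sigma> (\<bar>l\<bar> * \<sigma>\<^sup>2 / 2 + 1) \<le> q - p"
    unfolding p_def q_def by (rule G_minus_minus_G_plus_ge[OF \<sigma>])
  have p: "0 < p" "p < 1" and q: "q < 1" using G_bounds[OF \<sigma>] unfolding p_def q_def by auto
  have "0 \<le> q - p" using gap normal_density_nonneg[of 0 \<sigma>] by (smt (verit))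
  then have "q - p \<le> (q - p) / (1 - p)" using p by (simp add: le_divide_eq mult_left_le)
  also have "\<dots> = 1 - 1 / ((1 - p) / (1 - q))" using p q by (simp add: field_simps)
  also have "\<dots> \<le> ln ((1 - p) / (1 - q))"
    using ln_le_minus_one[of "(1 - q) / (1 - p)"] p q gap by (simp add: ln_div)
  finally show ?thesis using gap unfolding D_plus_def p_def q_def by linarith
qed

lemma D_plus_pos: "\<sigma> > 0 \<Longrightarrow> D_plus \<sigma> l > 0"
  using D_plus_ge[of \<sigma> l] normal_density_pos[of \<sigma> 0 "\<bar>l\<bar> * \<sigma>\<^sup>2 / 2 + 1"] by simp

lemma D_plus_le:
  assumes \<sigma>: "\<sigma> > 0" and l: "l \<ge> 2 / \<sigma>\<^sup>2"
  shows "D_plus \<sigma> l \<le> 2 * normal_density 0 \<sigma> (l * \<sigma>\<^sup>2 / 2 - 1) / (1 - normal_cdf \<sigma> 0)"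
proof -
  define v where "v = signal_threshold \<sigma> l"
  define p where "p = normal_cdf \<sigma> (v - 1)"
  define q where "q = normal_cdf \<sigma> (v + 1)"
  have v: "v + 1 \<le> 0" using l \<sigma> unfolding v_def signal_threshold_def by (simp add: field_simps)
  have "q - p \<le> normal_density 0 \<sigma> (v + 1) * ((v + 1) - (v - 1))"
    unfolding p_def q_def by (rule normal_cdf_diff_le[OF \<sigma> _ v]) auto
  also have "normal_density 0 \<sigma> (v + 1) = normal_density 0 \<sigma> (l * \<sigma>\<^sup>2 / 2 - 1)"
    unfolding v_def signal_threshold_def normal_density_def by (simp add: power2_commute algebra_simps)
  finally have qp: "q - p \<le> 2 * normal_density 0 \<sigma> (l * \<sigma>\<^sup>2 / 2 - 1)" by simp
  have p: "0 < 1 - p" and c0: "0 < 1 - normal_cdf \<sigma> 0"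
    using normal_cdf_bounds[OF \<sigma>] unfolding p_def by auto
  have q: "1 - normal_cdf \<sigma> 0 \<le> 1 - q" using normal_cdf_mono[OF \<sigma> v] unfolding q_def by simp
  have pq: "p \<le> q" unfolding p_def q_def by (rule normal_cdf_mono[OF \<sigma>]) simp
  have "D_plus \<sigma> l = ln ((1 - p) / (1 - q))" using \<sigma> by (simp add: D_plus_gaussian p_def q_def v_def)
  also have "\<dots> \<le> (1 - p) / (1 - q) - 1" using p q c0 by (intro ln_le_minus_one) simp
  also have "\<dots> = (q - p) / (1 - q)" using q c0 by (simp add: field_simps)
  also have "\<dots> \<le> (q - p) / (1 - normal_cdf \<sigma> 0)" using q c0 pq by (intro divide_left_mono) auto
  also have "\<dots> \<le> 2 * normal_density 0 \<sigma> (l * \<sigma>\<^sup>2 / 2 - 1) / (1 - normal_cdf \<sigma> 0)"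
    using qp c0 by (intro divide_right_mono) auto
  finally show ?thesis .
qed

text \<open>The constants below come from \<open>\<phi>(l\<sigma>\<^sup>2/2 \<plusminus> 1) = exp (-\<sigma>\<^sup>2 l\<^sup>2/8 + O(l))\<close>.\<close>

lemma eventually_exp_le_D_plus:
  assumes \<sigma>: "\<sigma> > 0" and a: "a > \<sigma>\<^sup>2 / 8"
  shows "eventually (\<lambda>z. exp (-a * z\<^sup>2) \<le> D_plus \<sigma> z) at_top"
proof -
  define C where "C = 2 / sqrt (2 * pi * \<sigma>\<^sup>2)"
  have C: "C > 0" using \<sigma> unfolding C_def by simp
  have "filterlim (\<lambda>z::real. (a - \<sigma>\<^sup>2 / 8) * z\<^sup>2 - z / 2 - (1 / (2 * \<sigma>\<^sup>2) - ln C)) at_top at_top"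
    using a by real_asymp
  then have "eventually (\<lambda>z. 0 \<le> (a - \<sigma>\<^sup>2 / 8) * z\<^sup>2 - z / 2 - (1 / (2 * \<sigma>\<^sup>2) - ln C)) at_top"
    unfolding filterlim_at_top by blast
  then show ?thesis using eventually_ge_at_top[of 0]
  proof eventually_elim
    case (elim z)
    have "-a * z\<^sup>2 \<le> ln C - (z * \<sigma>\<^sup>2 / 2 + 1)\<^sup>2 / (2 * \<sigma>\<^sup>2)"
      using elim \<sigma> by (simp add: field_simps power2_eq_square)
    then have "exp (-a * z\<^sup>2) \<le> exp (ln C - (z * \<sigma>\<^sup>2 / 2 + 1)\<^sup>2 / (2 * \<sigma>\<^sup>2))" by simp
    also have "\<dots> = 2 * normal_density 0 \<sigma> (\<bar>z\<bar> * \<sigma>\<^sup>2 / 2 + 1)"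
      using C elim unfolding normal_density_def C_def by (simp add: exp_diff exp_minus field_simps)
    also have "\<dots> \<le> D_plus \<sigma> z" by (rule D_plus_ge[OF \<sigma>])
    finally show ?case .
  qed
qed

lemma eventually_D_plus_le_exp:
  assumes \<sigma>: "\<sigma> > 0" and b: "b < \<sigma>\<^sup>2 / 8"
  shows "eventually (\<lambda>z. D_plus \<sigma> z \<le> exp (-b * z\<^sup>2)) at_top"
proof -
  define c0 where "c0 = 1 - normal_cdf \<sigma> 0"
  have c0: "c0 > 0" using normal_cdf_bounds[OF \<sigma>] unfolding c0_def by simp
  define C where "C = 2 / sqrt (2 * pi * \<sigma>\<^sup>2) / c0"
  have C: "C > 0" using \<sigma> c0 unfolding C_def by simp
  have "filterlim (\<lambda>z::real. (\<sigma>\<^sup>2 / 8 - b) * z\<^sup>2 - z / 2 - (ln C - 1 / (2 * \<sigma>\<^sup>2))) at_top at_top"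
    using b by real_asymp
  then have "eventually (\<lambda>z. 0 \<le> (\<sigma>\<^sup>2 / 8 - b) * z\<^sup>2 - z / 2 - (ln C - 1 / (2 * \<sigma>\<^sup>2))) at_top"
    unfolding filterlim_at_top by blast
  then show ?thesis using eventually_ge_at_top[of "2 / \<sigma>\<^sup>2"]
  proof eventually_elim
    case (elim z)
    have "D_plus \<sigma> z \<le> 2 * normal_density 0 \<sigma> (z * \<sigma>\<^sup>2 / 2 - 1) / c0"
      unfolding c0_def by (rule D_plus_le[OF \<sigma> elim(2)])
    also have "\<dots> = exp (ln C - (z * \<sigma>\<^sup>2 / 2 - 1)\<^sup>2 / (2 * \<sigma>\<^sup>2))"
      using C c0 unfolding normal_density_def C_def by (simp add: exp_diff exp_minus field_simps)
    also have "ln C - (z * \<sigma>\<^sup>2 / 2 - 1)\<^sup>2 / (2 * \<sigma>\<^sup>2) \<le> -b * z\<^sup>2"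
      using elim \<sigma> by (simp add: field_simps power2_eq_square)
    then have "exp (ln C - (z * \<sigma>\<^sup>2 / 2 - 1)\<^sup>2 / (2 * \<sigma>\<^sup>2)) \<le> exp (-b * z\<^sup>2)" by simp
    finally show ?case .
  qed
qed

lemma D_plus_locally_bounded_below:
  assumes \<sigma>: "\<sigma> > 0" shows "\<exists>\<delta>>0. \<forall>z. \<bar>z\<bar> \<le> R \<longrightarrow> \<delta> \<le> D_plus \<sigma> z"
proof (intro exI conjI allI impI)
  show "2 * normal_density 0 \<sigma> (\<bar>R\<bar> * \<sigma>\<^sup>2 / 2 + 1) > 0" using normal_density_pos[OF \<sigma>] by simp
  fix z assume "\<bar>z\<bar> \<le> R"
  then have "\<bar>\<bar>z\<bar> * \<sigma>\<^sup>2 / 2 + 1\<bar> \<le> \<bar>\<bar>R\<bar> * \<sigma>\<^sup>2 / 2 + 1\<bar>" by (simp add: mult_right_mono)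
  then have "normal_density 0 \<sigma> (\<bar>R\<bar> * \<sigma>\<^sup>2 / 2 + 1) \<le> normal_density 0 \<sigma> (\<bar>z\<bar> * \<sigma>\<^sup>2 / 2 + 1)"
    by (rule normal_density_le_abs_mono[OF \<sigma>])
  then show "2 * normal_density 0 \<sigma> (\<bar>R\<bar> * \<sigma>\<^sup>2 / 2 + 1) \<le> D_plus \<sigma> z"
    using D_plus_ge[OF \<sigma>, of z] by linarith
qed

theorem D_plus_recursion_asymptotics:
  fixes x :: "nat \<Rightarrow> real"
  assumes \<sigma>: "\<sigma> > 0" and rec: "\<And>n. n \<ge> T \<Longrightarrow> x (Suc n) = x n + D_plus \<sigma> (x n)"
  shows "(\<lambda>t. x (t - 1) / ((2 * sqrt 2 / \<sigma>) * sqrt (ln (real t)))) \<longlonglongrightarrow> 1"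
proof (rule tendsto_pred_index_sqrt_ln)
  have "sqrt 8 = 2 * sqrt 2" using real_sqrt_mult[of 4 2] by simp
  then have "1 / sqrt (\<sigma>\<^sup>2 / 8) = 2 * sqrt 2 / \<sigma>" using \<sigma> by (simp add: real_sqrt_divide)
  moreover have "(\<lambda>n. x n / sqrt (ln (real n))) \<longlonglongrightarrow> 1 / sqrt (\<sigma>\<^sup>2 / 8)"
    using \<sigma> by (intro drift_recursion_asymptotics[where T=T and D="D_plus \<sigma>"] D_plus_pos D_plus_locally_bounded_below
        eventually_exp_le_D_plus eventually_D_plus_le_exp rec) auto
  ultimately show "(\<lambda>n. x n / sqrt (ln (real n))) \<longlonglongrightarrow> 2 * sqrt 2 / \<sigma>" by simp
  show "2 * sqrt 2 / \<sigma> \<noteq> 0" using \<sigma> by simp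
qed

definition potential_drop :: "real \<Rightarrow> real \<Rightarrow> real" where
  "potential_drop \<sigma> K = min (1 / 18) ((normal_density 0 \<sigma> ((K + 1) * \<sigma>\<^sup>2 / 2 + 1))\<^sup>2 / 4)"

lemma potential_drop_pos: "\<sigma> > 0 \<Longrightarrow> potential_drop \<sigma> K > 0"
  unfolding potential_drop_def using normal_density_pos[of \<sigma> 0 "(K + 1) * \<sigma>\<^sup>2 / 2 + 1"] by simp

text \<open>For large \<open>l\<close> the two action probabilities are far apart in ratio, for bounded \<open>l\<close>
  in difference; either way the Bhattacharyya coefficient drops by a multiple of the probability of
  the wrong action.\<close>

lemma bhattacharyya_gap_large_llr:
  assumes \<sigma>: "\<sigma> > 0" and l: "1 \<le> l"
  shows "G \<sigma> 1 (-l) / 18 \<le> exp (-l / 2) * (1 - bhattacharyya (G \<sigma> 1 (-l)) (G \<sigma> (-1) (-l)))"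
proof -
  define p where "p = G \<sigma> 1 (-l)"
  define q where "q = G \<sigma> (-1) (-l)"
  have pq: "0 < p" "p < 1" "0 < q" "q < 1" using G_bounds[OF \<sigma>] unfolding p_def q_def by auto
  have "exp (-l / 2) \<le> exp (- (1 / 2))" using l by simp
  also have "\<dots> \<le> 2 / 3"
    using exp_ge_add_one_self[of "1/2 :: real"] by (simp add: exp_minus field_simps)
  finally have small: "exp (-l / 2) \<le> 2 / 3" .
  have ratio: "p \<le> exp (-l) * q" unfolding p_def q_def by (rule G_plus_le_exp_G_minus[OF \<sigma>])
  have "sqrt p \<le> sqrt (exp (-l) * q)" using ratio by simp
  also have "\<dots> = exp (-l / 2) * sqrt q" by (simp add: real_sqrt_mult sqrt_exp)
  also have "\<dots> \<le> 2 / 3 * sqrt q" using small pq by (intro mult_right_mono) auto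
  finally have "q / 18 \<le> 1 - bhattacharyya p q" using pq by (intro bhattacharyya_gap_sqrt_ratio) auto
  then have "exp (-l / 2) * (q / 18) \<le> exp (-l / 2) * (1 - bhattacharyya p q)"
    by (intro mult_left_mono) auto
  moreover have "exp (-l) * q \<le> exp (-l / 2) * q" using l pq by (intro mult_right_mono) auto
  moreover have "exp (-l / 2) * (q / 18) = exp (-l / 2) * q / 18" by simp
  ultimately show ?thesis using ratio unfolding p_def q_def by linarith
qed

lemma bhattacharyya_gap_bounded_llr:
  assumes \<sigma>: "\<sigma> > 0" and K: "0 \<le> K" "-K < l" and l: "l < 1"
  shows "(normal_density 0 \<sigma> ((K + 1) * \<sigma>\<^sup>2 / 2 + 1))\<^sup>2 / 4
    \<le> exp (-l / 2) * (1 - bhattacharyya (G \<sigma> 1 (-l)) (G \<sigma> (-1) (-l)))"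
proof -
  define p where "p = G \<sigma> 1 (-l)"
  define q where "q = G \<sigma> (-1) (-l)"
  define \<delta> where "\<delta> = normal_density 0 \<sigma> ((K + 1) * \<sigma>\<^sup>2 / 2 + 1)"
  have pq: "0 < p" "p < 1" "0 < q" "q < 1" using G_bounds[OF \<sigma>] unfolding p_def q_def by auto
  have "\<bar>l\<bar> * \<sigma>\<^sup>2 / 2 + 1 \<le> (K + 1) * \<sigma>\<^sup>2 / 2 + 1"
    using l K by (simp add: mult_right_mono divide_right_mono)
  then have "\<delta> \<le> normal_density 0 \<sigma> (\<bar>l\<bar> * \<sigma>\<^sup>2 / 2 + 1)"
    unfolding \<delta>_def using \<sigma> by (intro normal_density_le_abs_mono) auto
  then have "2 * \<delta> \<le> q - p" using G_minus_minus_G_plus_ge[OF \<sigma>, of l] unfolding p_def q_def by linarith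
  then have "(2 * \<delta>)\<^sup>2 \<le> (q - p)\<^sup>2" by (intro power_mono) (auto simp: \<delta>_def)
  moreover have "p \<le> q"
    using \<open>2 * \<delta> \<le> q - p\<close> normal_density_nonneg[of 0 \<sigma>] unfolding \<delta>_def by (smt (verit))
  then have "(q - p)\<^sup>2 / 8 \<le> 1 - bhattacharyya p q" using pq by (intro bhattacharyya_gap_diff) auto
  ultimately have gap: "\<delta>\<^sup>2 / 2 \<le> 1 - bhattacharyya p q" by (simp add: power_mult_distrib)
  have "1 / 2 \<le> exp (- (1 / 2) :: real)" using exp_half_le2 by (simp add: exp_minus field_simps)
  also have "\<dots> \<le> exp (-l / 2)" using l by simp
  finally have "1 / 2 * (\<delta>\<^sup>2 / 2) \<le> exp (-l / 2) * (1 - bhattacharyya p q)"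
    using gap by (intro mult_mono) auto
  then show ?thesis unfolding p_def q_def \<delta>_def by simp
qed

lemma exp_half_bhattacharyya_le:
  assumes \<sigma>: "\<sigma> > 0" and K: "0 \<le> K" "-K < l"
  shows "exp (-l / 2) * bhattacharyya (G \<sigma> 1 (-l)) (G \<sigma> (-1) (-l)) + potential_drop \<sigma> K * G \<sigma> 1 (-l)
    \<le> exp (-l / 2)"
proof -
  have p: "0 < G \<sigma> 1 (-l)" "G \<sigma> 1 (-l) < 1" using G_bounds[OF \<sigma>] by auto
  have "potential_drop \<sigma> K * G \<sigma> 1 (-l)
      \<le> exp (-l / 2) * (1 - bhattacharyya (G \<sigma> 1 (-l)) (G \<sigma> (-1) (-l)))"
  proof (cases "1 \<le> l")
    case True
    have "potential_drop \<sigma> K * G \<sigma> 1 (-l) \<le> G \<sigma> 1 (-l) / 18"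
      using p unfolding potential_drop_def by (simp add: mult_right_mono)
    with bhattacharyya_gap_large_llr[OF \<sigma> True] show ?thesis by linarith
  next
    case False
    have "potential_drop \<sigma> K * G \<sigma> 1 (-l) \<le> potential_drop \<sigma> K"
      using p potential_drop_pos[OF \<sigma>, of K] by (simp add: mult_left_le)
    also have "\<dots> \<le> (normal_density 0 \<sigma> ((K + 1) * \<sigma>\<^sup>2 / 2 + 1))\<^sup>2 / 4"
      unfolding potential_drop_def by simp
    finally show ?thesis using bhattacharyya_gap_bounded_llr[OF \<sigma> K] False by linarith
  qed
  then show ?thesis by (simp add: algebra_simps)
qed

lemma exp_half_D_plus_mult:
  assumes \<sigma>: "\<sigma> > 0"
  shows "exp (-(l + D_plus \<sigma> l) / 2) * (1 - G \<sigma> 1 (-l))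
    = exp (-l / 2) * sqrt ((1 - G \<sigma> 1 (-l)) * (1 - G \<sigma> (-1) (-l)))"
proof -
  define p where "p = G \<sigma> 1 (-l)"
  define q where "q = G \<sigma> (-1) (-l)"
  have pq: "p < 1" "q < 1" using G_bounds[OF \<sigma>] unfolding p_def q_def by auto
  have "-(l + D_plus \<sigma> l) / 2 = -l / 2 + (-(ln ((1 - p) / (1 - q))) / 2)"
    unfolding D_plus_def p_def q_def by simp
  then have "exp (-(l + D_plus \<sigma> l) / 2) = exp (-l / 2) * exp (-(ln ((1 - p) / (1 - q))) / 2)"
    by (simp only: exp_add)
  then show ?thesis using exp_neg_half_ln_div_mult[of "1 - p" "1 - q"] pq unfolding p_def q_def by simp
qed

lemma exp_half_D_minus_mult:
  assumes \<sigma>: "\<sigma> > 0"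
  shows "exp (-(l + D_minus \<sigma> l) / 2) * G \<sigma> 1 (-l)
    = exp (-l / 2) * sqrt (G \<sigma> 1 (-l) * G \<sigma> (-1) (-l))"
proof -
  define p where "p = G \<sigma> 1 (-l)"
  define q where "q = G \<sigma> (-1) (-l)"
  have pq: "0 < p" "0 < q" using G_bounds[OF \<sigma>] unfolding p_def q_def by auto
  have "-(l + D_minus \<sigma> l) / 2 = -l / 2 + (-(ln (p / q)) / 2)"
    unfolding D_minus_def p_def q_def by simp
  then have "exp (-(l + D_minus \<sigma> l) / 2) = exp (-l / 2) * exp (-(ln (p / q)) / 2)"
    by (simp only: exp_add)
  then show ?thesis using exp_neg_half_ln_div_mult[of p q] pq unfolding p_def q_def by simp
qed

lemma nn_integral_exp_half_next_llr:
  assumes \<sigma>: "\<sigma> > 0"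
  shows "(\<integral>\<^sup>+y. ennreal (exp (-(next_llr \<sigma> l y) / 2)) \<partial>normal_distr 1 \<sigma>)
    = ennreal (exp (-l / 2) * bhattacharyya (G \<sigma> 1 (-l)) (G \<sigma> (-1) (-l)))"
proof -
  interpret prob_space "normal_distr 1 \<sigma>" using \<sigma> by (rule prob_space_normal_distr)
  define p where "p = G \<sigma> 1 (-l)"
  define v where "v = signal_threshold \<sigma> l"
  define A where "A = exp (-(l + D_plus \<sigma> l) / 2)"
  define B where "B = exp (-(l + D_minus \<sigma> l) / 2)"
  have p: "0 < p" "p < 1" using G_bounds[OF \<sigma>] unfolding p_def by auto
  have wrong: "prob {..v} = p"
    using \<sigma> by (simp add: measure_normal_distr_atMost G_plus_gaussian p_def v_def)
  have "{v<..} = space (normal_distr 1 \<sigma>) - {..v}" by auto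
  then have right: "prob {v<..} = 1 - p" using prob_compl[of "{..v}"] wrong by simp
  have "(\<lambda>y. ennreal (exp (-(next_llr \<sigma> l y) / 2)))
      = (\<lambda>y. ennreal A * indicator {v<..} y + ennreal B * indicator {..v} y)"
    using \<sigma> by (auto simp: fun_eq_iff next_llr_gaussian A_def B_def v_def indicator_def field_simps)
  then have "(\<integral>\<^sup>+y. ennreal (exp (-(next_llr \<sigma> l y) / 2)) \<partial>normal_distr 1 \<sigma>)
      = ennreal (A * (1 - p)) + ennreal (B * p)"
    using p by (simp add: nn_integral_add nn_integral_cmult_indicator emeasure_eq_measure wrong right
        ennreal_mult A_def B_def)
  then show ?thesis
    using G_bounds[OF \<sigma>, of l] unfolding A_def B_def p_def exp_half_D_plus_mult[OF \<sigma>]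
      exp_half_D_minus_mult[OF \<sigma>] bhattacharyya_def
    by (simp add: distrib_left ennreal_plus)
qed

lemma nn_integral_potential_step_le:
  assumes \<sigma>: "\<sigma> > 0" and K: "0 \<le> K" "-K < l"
  shows "(\<integral>\<^sup>+y. ennreal (exp (-(next_llr \<sigma> l y) / 2))
      + ennreal (potential_drop \<sigma> K) * indicator {..signal_threshold \<sigma> l} y \<partial>normal_distr 1 \<sigma>)
    \<le> ennreal (exp (-l / 2))"
proof -
  interpret prob_space "normal_distr 1 \<sigma>" using \<sigma> by (rule prob_space_normal_distr)
  have "(\<lambda>y. next_llr \<sigma> l y) \<in> borel_measurable (normal_distr 1 \<sigma>)"
    by (rule borel_measurable_next_llr[OF \<sigma>]) auto
  then have meas: "(\<lambda>y. ennreal (exp (-(next_llr \<sigma> l y) / 2))) \<in> borel_measurable (normal_distr 1 \<sigma>)"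
    by measurable
  have wrong: "emeasure (normal_distr 1 \<sigma>) {..signal_threshold \<sigma> l} = G \<sigma> 1 (-l)"
    using \<sigma> by (simp add: emeasure_eq_measure measure_normal_distr_atMost G_plus_gaussian)
  have meas_wrong: "(\<lambda>y. ennreal (potential_drop \<sigma> K) * indicator {..signal_threshold \<sigma> l} y)
      \<in> borel_measurable (normal_distr 1 \<sigma>)"
    by (intro borel_measurable_times_ennreal borel_measurable_const borel_measurable_indicator) simp
  have "(\<integral>\<^sup>+y. ennreal (exp (-(next_llr \<sigma> l y) / 2))
      + ennreal (potential_drop \<sigma> K) * indicator {..signal_threshold \<sigma> l} y \<partial>normal_distr 1 \<sigma>)
      = (\<integral>\<^sup>+y. ennreal (exp (-(next_llr \<sigma> l y) / 2)) \<partial>normal_distr 1 \<sigma>)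
        + ennreal (potential_drop \<sigma> K) * emeasure (normal_distr 1 \<sigma>) {..signal_threshold \<sigma> l}"
    by (subst nn_integral_add[OF meas meas_wrong]) (simp add: nn_integral_cmult_indicator)
  also have "\<dots> = ennreal (exp (-l / 2) * bhattacharyya (G \<sigma> 1 (-l)) (G \<sigma> (-1) (-l))
      + potential_drop \<sigma> K * G \<sigma> 1 (-l))"
  proof -
    have "0 \<le> bhattacharyya (G \<sigma> 1 (-l)) (G \<sigma> (-1) (-l))"
      unfolding bhattacharyya_def using G_bounds[OF \<sigma>, of l] by simp
    then show ?thesis using G_bounds[OF \<sigma>, of l] potential_drop_pos[OF \<sigma>, of K]
      unfolding nn_integral_exp_half_next_llr[OF \<sigma>] wrong by (simp add: ennreal_mult ennreal_plus)
  qed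
  also have "\<dots> \<le> ennreal (exp (-l / 2))"
    by (intro ennreal_leI exp_half_bhattacharyya_le[OF \<sigma> K])
  finally show ?thesis .
qed

lemma ell_aux_Suc_next_llr: "ell_aux \<sigma> f (Suc n) = next_llr \<sigma> (ell_aux \<sigma> f n) (f n)"
  by (simp add: next_llr_def)

lemma ell_aux_cong: "(\<And>k. k < m \<Longrightarrow> f k = g k) \<Longrightarrow> ell_aux \<sigma> f m = ell_aux \<sigma> g m"
  by (induction m) auto

lemma borel_measurable_ell_aux_PiM:
  assumes \<sigma>: "\<sigma> > 0" and "m \<le> n"
  shows "(\<lambda>f. ell_aux \<sigma> f m) \<in> borel_measurable (PiM {..<n} (\<lambda>_. borel))"
  using \<open>m \<le> n\<close>
proof (induction m)
  case (Suc m)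
  then have "(\<lambda>f. f m) \<in> borel_measurable (PiM {..<n} (\<lambda>_. borel))"
    by (intro measurable_component_singleton) auto
  with Suc show ?case
    unfolding ell_aux_Suc_next_llr by (intro borel_measurable_next_llr[OF \<sigma>]) auto
qed simp

section \<open>The public log-likelihood ratio process\<close>

lemma (in prob_space) nn_integral_indep_var:
  assumes ind: "indep_var S Z T Y" and \<Phi>: "\<Phi> \<in> borel_measurable (S \<Otimes>\<^sub>M T)"
  shows "(\<integral>\<^sup>+\<omega>. \<Phi> (Z \<omega>, Y \<omega>) \<partial>M) = (\<integral>\<^sup>+\<omega>. (\<integral>\<^sup>+y. \<Phi> (Z \<omega>, y) \<partial>distr M T Y) \<partial>M)"
proof -
  have rv: "random_variable S Z" "random_variable T Y"
    and eq: "distr M S Z \<Otimes>\<^sub>M distr M T Y = distr M (S \<Otimes>\<^sub>M T) (\<lambda>x. (Z x, Y x))"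
    using ind[unfolded indep_var_distribution_eq] by auto
  interpret Yd: prob_space "distr M T Y" using rv(2) by (rule prob_space_distr)
  have \<Phi>1: "\<Phi> \<in> borel_measurable (distr M S Z \<Otimes>\<^sub>M distr M T Y)"
    using \<Phi> by (subst measurable_cong_sets[OF sets_pair_measure_cong refl]) auto
  have \<Phi>2: "\<Phi> \<in> borel_measurable (S \<Otimes>\<^sub>M distr M T Y)"
    using \<Phi> by (subst measurable_cong_sets[OF sets_pair_measure_cong refl]) auto
  have "(\<integral>\<^sup>+\<omega>. \<Phi> (Z \<omega>, Y \<omega>) \<partial>M) = (\<integral>\<^sup>+p. \<Phi> p \<partial>distr M (S \<Otimes>\<^sub>M T) (\<lambda>x. (Z x, Y x)))"
    using rv \<Phi> by (subst nn_integral_distr) (auto intro: measurable_Pair)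
  also have "\<dots> = (\<integral>\<^sup>+z. (\<integral>\<^sup>+y. \<Phi> (z, y) \<partial>distr M T Y) \<partial>distr M S Z)"
    using Yd.nn_integral_fst[OF \<Phi>1] by (simp add: eq)
  also have "\<dots> = (\<integral>\<^sup>+\<omega>. (\<integral>\<^sup>+y. \<Phi> (Z \<omega>, y) \<partial>distr M T Y) \<partial>M)"
    using rv Yd.borel_measurable_nn_integral_fst[OF \<Phi>2] by (subst nn_integral_distr) auto
  finally show ?thesis .
qed

locale gaussian_social_learning = prob_space M for M :: "'a measure" +
  fixes s :: "nat \<Rightarrow> 'a \<Rightarrow> real" and \<sigma> :: real
  assumes sigma_pos: "\<sigma> > 0"
    and indep_signals: "indep_vars (\<lambda>_. borel) s UNIV"
    and distributed_signal: "\<And>n. distributed M lborel (s n) (\<lambda>x. ennreal (sig_density \<sigma> 1 x))"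
begin

text \<open>\<open>ell n\<close> is the public log-likelihood ratio \<open>l\<^sub>n\<^sub>+\<^sub>1\<close> of agent \<open>n + 1\<close>, whose private
  signal is \<open>s n\<close>.\<close>

definition ell :: "nat \<Rightarrow> 'a \<Rightarrow> real" where
  "ell n \<omega> = ell_aux \<sigma> (\<lambda>k. s k \<omega>) n"

definition history :: "nat \<Rightarrow> 'a \<Rightarrow> nat \<Rightarrow> real" where
  "history n \<omega> = restrict (\<lambda>i. s i \<omega>) {..<n}"

lemma borel_measurable_signal[measurable]: "s n \<in> borel_measurable M"
  using distributed_measurable[OF distributed_signal[of n]] by simp

lemma ell_0[simp]: "ell 0 \<omega> = 0"
  by (simp add: ell_def)

lemma ell_Suc: "ell (Suc n) \<omega> = next_llr \<sigma> (ell n \<omega>) (s n \<omega>)"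
  unfolding ell_def by (rule ell_aux_Suc_next_llr)

lemma borel_measurable_ell[measurable]: "ell n \<in> borel_measurable M"
proof (induction n)
  case (Suc n)
  then show ?case
    unfolding ell_Suc[abs_def] by (intro borel_measurable_next_llr[OF sigma_pos]) auto
qed (simp add: ell_def)

lemma ell_eq_ell_aux_history: "m \<le> n \<Longrightarrow> ell m \<omega> = ell_aux \<sigma> (history n \<omega>) m"
  unfolding ell_def history_def by (rule ell_aux_cong) auto

lemma history_in_space: "history n \<omega> \<in> space (PiM {..<n} (\<lambda>_. borel))"
  by (simp add: history_def space_PiM PiE_iff)

lemma distr_signal: "distr M borel (s n) = normal_distr 1 \<sigma>"
proof -
  have "distr M borel (s n) = distr M lborel (s n)" by (rule distr_cong) auto
  also have "\<dots> = density lborel (\<lambda>x. ennreal (sig_density \<sigma> 1 x))"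
    by (rule distributed_distr_eq_density[OF distributed_signal])
  finally show ?thesis by (simp add: sig_density_def)
qed

lemma nn_integral_history_signal:
  assumes \<Phi>: "\<Phi> \<in> borel_measurable (PiM {..<n} (\<lambda>_. borel) \<Otimes>\<^sub>M borel)"
  shows "(\<integral>\<^sup>+\<omega>. \<Phi> (history n \<omega>, s n \<omega>) \<partial>M)
    = (\<integral>\<^sup>+\<omega>. (\<integral>\<^sup>+y. \<Phi> (history n \<omega>, y) \<partial>normal_distr 1 \<sigma>) \<partial>M)"
proof -
  define Y where "Y \<omega> = restrict (\<lambda>i. s i \<omega>) {n}" for \<omega>
  define \<Phi>' where "\<Phi>' p = \<Phi> (fst p, snd p n)" for p :: "(nat \<Rightarrow> real) \<times> (nat \<Rightarrow> real)"
  have component: "(\<lambda>g. g n) \<in> measurable (PiM {n} (\<lambda>_. borel)) (borel :: real measure)"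
    by (rule measurable_component_singleton) auto
  have indep: "indep_var (PiM {..<n} (\<lambda>_. borel)) (history n) (PiM {n} (\<lambda>_. borel)) Y"
    unfolding history_def Y_def by (rule indep_var_restrict[OF indep_signals]) auto
  have [measurable]: "Y \<in> measurable M (PiM {n} (\<lambda>_. borel))" unfolding Y_def by measurable
  have "\<Phi>' \<in> borel_measurable (PiM {..<n} (\<lambda>_. borel) \<Otimes>\<^sub>M PiM {n} (\<lambda>_. borel))"
    unfolding \<Phi>'_def using \<Phi> component by measurable
  from nn_integral_indep_var[OF indep this]
  have "(\<integral>\<^sup>+\<omega>. \<Phi> (history n \<omega>, s n \<omega>) \<partial>M)
      = (\<integral>\<^sup>+\<omega>. (\<integral>\<^sup>+g. \<Phi>' (history n \<omega>, g) \<partial>distr M (PiM {n} (\<lambda>_. borel)) Y) \<partial>M)"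
    by (simp add: \<Phi>'_def Y_def)
  also have "\<dots> = (\<integral>\<^sup>+\<omega>. (\<integral>\<^sup>+y. \<Phi> (history n \<omega>, y) \<partial>normal_distr 1 \<sigma>) \<partial>M)"
  proof (rule nn_integral_cong)
    fix \<omega>
    have [measurable]: "(\<lambda>y. \<Phi> (history n \<omega>, y)) \<in> borel_measurable borel"
      using history_in_space[of n \<omega>] \<Phi> by (rule measurable_compose_Pair1)
    have "(\<integral>\<^sup>+g. \<Phi>' (history n \<omega>, g) \<partial>distr M (PiM {n} (\<lambda>_. borel)) Y)
        = (\<integral>\<^sup>+x. \<Phi> (history n \<omega>, s n x) \<partial>M)"
      using component by (subst nn_integral_distr) (auto simp: \<Phi>'_def Y_def)
    also have "\<dots> = (\<integral>\<^sup>+y. \<Phi> (history n \<omega>, y) \<partial>distr M borel (s n))"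
      by (subst nn_integral_distr) auto
    also have "\<dots> = (\<integral>\<^sup>+y. \<Phi> (history n \<omega>, y) \<partial>normal_distr 1 \<sigma>)"
      by (simp add: distr_signal)
    finally show "(\<integral>\<^sup>+g. \<Phi>' (history n \<omega>, g) \<partial>distr M (PiM {n} (\<lambda>_. borel)) Y)
        = (\<integral>\<^sup>+y. \<Phi> (history n \<omega>, y) \<partial>normal_distr 1 \<sigma>)" .
  qed
  finally show ?thesis .
qed

definition stays_above :: "real \<Rightarrow> nat \<Rightarrow> 'a set" where
  "stays_above K n = {\<omega> \<in> space M. \<forall>m\<le>n. -K < ell m \<omega>}"

definition wrong_action :: "nat \<Rightarrow> 'a set" where
  "wrong_action n = {\<omega> \<in> space M. s n \<omega> \<le> signal_threshold \<sigma> (ell n \<omega>)}"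

definition potential :: "real \<Rightarrow> nat \<Rightarrow> ennreal" where
  "potential K n = (\<integral>\<^sup>+\<omega>. ennreal (exp (-(ell n \<omega>) / 2)) * indicator (stays_above K n) \<omega> \<partial>M)"

definition history_above :: "real \<Rightarrow> nat \<Rightarrow> (nat \<Rightarrow> real) set" where
  "history_above K n = {f \<in> space (PiM {..<n} (\<lambda>_. borel)). \<forall>m\<le>n. -K < ell_aux \<sigma> f m}"

definition step_integrand :: "real \<Rightarrow> nat \<Rightarrow> (nat \<Rightarrow> real) \<times> real \<Rightarrow> ennreal" where
  "step_integrand K n p =
    (if fst p \<in> history_above K n
     then ennreal (exp (-(next_llr \<sigma> (ell_aux \<sigma> (fst p) n) (snd p)) / 2))
       + (if snd p \<le> signal_threshold \<sigma> (ell_aux \<sigma> (fst p) n) then ennreal (potential_drop \<sigma> K) else 0)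
     else 0)"

lemma sets_stays_above[measurable]: "stays_above K n \<in> sets M"
proof -
  have "stays_above K n = space M \<inter> (\<Inter>m\<in>{..n}. {\<omega> \<in> space M. -K < ell m \<omega>})"
    unfolding stays_above_def by auto
  also have "\<dots> \<in> sets M" by (intro sets.Int sets.top sets.finite_INT) auto
  finally show ?thesis .
qed

lemma sets_wrong_action[measurable]: "wrong_action n \<in> sets M"
  unfolding wrong_action_def signal_threshold_def by measurable

lemma stays_above_Suc_subset: "stays_above K (Suc n) \<subseteq> stays_above K n"
  unfolding stays_above_def by auto

lemma stays_above_0: "K > 0 \<Longrightarrow> stays_above K 0 = space M"
  unfolding stays_above_def by auto

lemma sets_history_above: "history_above K n \<in> sets (PiM {..<n} (\<lambda>_. borel))"
proof -
  note [measurable] = borel_measurable_ell_aux_PiM[OF sigma_pos]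
  have "history_above K n = space (PiM {..<n} (\<lambda>_. borel))
      \<inter> (\<Inter>m\<in>{..n}. {f \<in> space (PiM {..<n} (\<lambda>_. borel)). -K < ell_aux \<sigma> f m})"
    unfolding history_above_def by auto
  also have "\<dots> \<in> sets (PiM {..<n} (\<lambda>_. borel))"
    by (intro sets.Int sets.top sets.finite_INT) auto
  finally show ?thesis .
qed

lemma history_in_history_above_iff: "\<omega> \<in> space M \<Longrightarrow> history n \<omega> \<in> history_above K n \<longleftrightarrow> \<omega> \<in> stays_above K n"
  unfolding history_above_def stays_above_def using history_in_space by (auto simp: ell_eq_ell_aux_history)

lemma borel_measurable_step_integrand:
  "step_integrand K n \<in> borel_measurable (PiM {..<n} (\<lambda>_. borel) \<Otimes>\<^sub>M borel)"
proof -
  have [measurable]: "(\<lambda>p. ell_aux \<sigma> (fst p) n) \<in> borel_measurable (PiM {..<n} (\<lambda>_. borel) \<Otimes>\<^sub>M borel)"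
    using borel_measurable_ell_aux_PiM[OF sigma_pos order_refl] by measurable
  have [measurable]: "(\<lambda>p. next_llr \<sigma> (ell_aux \<sigma> (fst p) n) (snd p))
      \<in> borel_measurable (PiM {..<n} (\<lambda>_. borel) \<Otimes>\<^sub>M borel)"
    by (intro borel_measurable_next_llr[OF sigma_pos]) auto
  have [measurable]: "Measurable.pred (PiM {..<n} (\<lambda>_. borel) \<Otimes>\<^sub>M borel) (\<lambda>p. fst p \<in> history_above K n)"
    using sets_history_above by measurable
  show ?thesis unfolding step_integrand_def[abs_def] signal_threshold_def by measurable
qed

lemma step_integrand_history:
  assumes "\<omega> \<in> space M"
  shows "step_integrand K n (history n \<omega>, s n \<omega>) = (if \<omega> \<in> stays_above K n
    then ennreal (exp (-(ell (Suc n) \<omega>) / 2))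
      + (if \<omega> \<in> wrong_action n then ennreal (potential_drop \<sigma> K) else 0)
    else 0)"
  using assms history_in_history_above_iff[OF assms]
  by (simp add: step_integrand_def ell_Suc wrong_action_def ell_eq_ell_aux_history[of n n, symmetric])

text \<open>Leaving \<open>stays_above K\<close> at step \<open>n + 1\<close> means \<open>ell (Suc n) \<le> -K\<close>, so the potential
  there is at least \<open>exp (K/2)\<close>.\<close>

lemma step_integrand_history_ge:
  assumes \<omega>: "\<omega> \<in> space M"
  shows "ennreal (exp (-(ell (Suc n) \<omega>) / 2)) * indicator (stays_above K (Suc n)) \<omega>
      + ennreal (exp (K / 2)) * indicator (stays_above K n - stays_above K (Suc n)) \<omega>
      + ennreal (potential_drop \<sigma> K) * indicator (wrong_action n \<inter> stays_above K n) \<omega>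
    \<le> step_integrand K n (history n \<omega>, s n \<omega>)"
proof (cases "\<omega> \<in> stays_above K n")
  case False
  then have "\<omega> \<notin> stays_above K (Suc n)" using stays_above_Suc_subset by auto
  then show ?thesis using False by (simp add: step_integrand_history[OF \<omega>])
next
  case in_above: True
  show ?thesis
  proof (cases "\<omega> \<in> stays_above K (Suc n)")
    case True
    then show ?thesis using in_above by (simp add: step_integrand_history[OF \<omega>] indicator_def)
  next
    case False
    then have "ell (Suc n) \<omega> \<le> -K" using in_above \<omega> unfolding stays_above_def by (auto simp: le_Suc_eq)
    then have "ennreal (exp (K / 2)) \<le> ennreal (exp (-(ell (Suc n) \<omega>) / 2))"
      by (intro ennreal_leI) simp
    then show ?thesis
      using in_above False by (auto simp: step_integrand_history[OF \<omega>] indicator_def intro: add_mono)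
  qed
qed

lemma nn_integral_step_integrand_le:
  assumes K: "0 \<le> K"
  shows "(\<integral>\<^sup>+y. step_integrand K n (f, y) \<partial>normal_distr 1 \<sigma>)
    \<le> ennreal (exp (-(ell_aux \<sigma> f n) / 2)) * indicator (history_above K n) f"
proof (cases "f \<in> history_above K n")
  case True
  then have l: "-K < ell_aux \<sigma> f n" unfolding history_above_def by auto
  have "(\<integral>\<^sup>+y. step_integrand K n (f, y) \<partial>normal_distr 1 \<sigma>)
      = (\<integral>\<^sup>+y. ennreal (exp (-(next_llr \<sigma> (ell_aux \<sigma> f n) y) / 2))
        + ennreal (potential_drop \<sigma> K) * indicator {..signal_threshold \<sigma> (ell_aux \<sigma> f n)} y
        \<partial>normal_distr 1 \<sigma>)"
    using True by (intro nn_integral_cong) (simp add: step_integrand_def indicator_def)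
  also have "\<dots> \<le> ennreal (exp (-(ell_aux \<sigma> f n) / 2))"
    by (rule nn_integral_potential_step_le[OF sigma_pos K l])
  finally show ?thesis using True by simp
qed (simp add: step_integrand_def)

lemma potential_step:
  assumes K: "0 \<le> K"
  shows "potential K (Suc n) + ennreal (exp (K / 2)) * emeasure M (stays_above K n - stays_above K (Suc n))
      + ennreal (potential_drop \<sigma> K) * emeasure M (wrong_action n \<inter> stays_above K n) \<le> potential K n"
proof -
  have "potential K (Suc n) + ennreal (exp (K / 2)) * emeasure M (stays_above K n - stays_above K (Suc n))
      + ennreal (potential_drop \<sigma> K) * emeasure M (wrong_action n \<inter> stays_above K n)
      = (\<integral>\<^sup>+\<omega>. ennreal (exp (-(ell (Suc n) \<omega>) / 2)) * indicator (stays_above K (Suc n)) \<omega>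
        + ennreal (exp (K / 2)) * indicator (stays_above K n - stays_above K (Suc n)) \<omega>
        + ennreal (potential_drop \<sigma> K) * indicator (wrong_action n \<inter> stays_above K n) \<omega> \<partial>M)"
    unfolding potential_def by (simp add: nn_integral_add nn_integral_cmult_indicator)
  also have "\<dots> \<le> (\<integral>\<^sup>+\<omega>. step_integrand K n (history n \<omega>, s n \<omega>) \<partial>M)"
    by (intro nn_integral_mono step_integrand_history_ge)
  also have "\<dots> = (\<integral>\<^sup>+\<omega>. (\<integral>\<^sup>+y. step_integrand K n (history n \<omega>, y) \<partial>normal_distr 1 \<sigma>) \<partial>M)"
    by (rule nn_integral_history_signal[OF borel_measurable_step_integrand])
  also have "\<dots> \<le> (\<integral>\<^sup>+\<omega>. ennreal (exp (-(ell_aux \<sigma> (history n \<omega>) n) / 2))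
      * indicator (history_above K n) (history n \<omega>) \<partial>M)"
    by (intro nn_integral_mono nn_integral_step_integrand_le[OF K])
  also have "\<dots> = potential K n"
    unfolding potential_def
    by (intro nn_integral_cong) (simp add: history_in_history_above_iff ell_eq_ell_aux_history[of n n, symmetric] indicator_def)
  finally show ?thesis .
qed

lemma potential_0: "K > 0 \<Longrightarrow> potential K 0 = 1"
  unfolding potential_def by (simp add: stays_above_0 emeasure_space_1)

lemma potential_telescope:
  assumes K: "K > 0"
  shows "potential K n + ennreal (exp (K / 2)) * emeasure M (space M - stays_above K n)
      + ennreal (potential_drop \<sigma> K) * (\<Sum>k<n. emeasure M (wrong_action k \<inter> stays_above K k)) \<le> 1"
proof (induction n)
  case 0 then show ?case using potential_0[OF K] stays_above_0[OF K] by simp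
next
  case (Suc n)
  define E where "E = ennreal (exp (K / 2))"
  define c where "c = ennreal (potential_drop \<sigma> K)"
  define a where "a = emeasure M (space M - stays_above K n)"
  define b where "b = emeasure M (stays_above K n - stays_above K (Suc n))"
  define S where "S = (\<Sum>k<n. emeasure M (wrong_action k \<inter> stays_above K k))"
  have "space M - stays_above K (Suc n) = (space M - stays_above K n) \<union> (stays_above K n - stays_above K (Suc n))"
    using stays_above_Suc_subset[of K n] sets.sets_into_space[OF sets_stays_above[of K n]] by blast
  then have ab: "emeasure M (space M - stays_above K (Suc n)) = a + b"
    unfolding a_def b_def by (simp only:) (rule plus_emeasure[symmetric], auto)
  have "potential K (Suc n) + E * emeasure M (space M - stays_above K (Suc n))
      + c * (\<Sum>k<Suc n. emeasure M (wrong_action k \<inter> stays_above K k))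
      = (potential K (Suc n) + E * b + c * emeasure M (wrong_action n \<inter> stays_above K n)) + (E * a + c * S)"
    unfolding ab S_def by (simp add: distrib_left add_ac)
  also have "\<dots> \<le> potential K n + (E * a + c * S)"
    using potential_step[of K n] K unfolding E_def b_def c_def by (intro add_right_mono) simp
  also have "\<dots> \<le> 1" using Suc unfolding E_def c_def a_def S_def by (simp add: add_ac)
  finally show ?case unfolding E_def c_def .
qed

lemma emeasure_not_stays_above_le:
  assumes K: "K > 0" shows "emeasure M (space M - stays_above K n) \<le> ennreal (exp (-K / 2))"
proof -
  have "ennreal (exp (K / 2)) * emeasure M (space M - stays_above K n) \<le> 1"
    using potential_telescope[OF K, of n] by (rule order_trans[rotated]) (simp add: add_increasing add_increasing2)
  then have "ennreal (exp (-K / 2)) * (ennreal (exp (K / 2)) * emeasure M (space M - stays_above K n))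
      \<le> ennreal (exp (-K / 2))"
    using mult_left_mono[of _ 1 "ennreal (exp (-K / 2))"] by simp
  moreover have "ennreal (exp (-K / 2)) * ennreal (exp (K / 2)) = 1"
    by (simp add: ennreal_mult[symmetric] exp_add[symmetric])
  ultimately show ?thesis by (simp add: mult.assoc[symmetric])
qed

lemma sum_measure_wrong_action_le:
  assumes K: "K > 0"
  shows "(\<Sum>k<n. measure M (wrong_action k \<inter> stays_above K k)) \<le> 1 / potential_drop \<sigma> K"
proof -
  have c: "potential_drop \<sigma> K > 0" by (rule potential_drop_pos[OF sigma_pos])
  have "ennreal (potential_drop \<sigma> K) * (\<Sum>k<n. emeasure M (wrong_action k \<inter> stays_above K k)) \<le> 1"
    using potential_telescope[OF K, of n] by (rule order_trans[rotated]) (simp add: add_increasing)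
  then have "ennreal (potential_drop \<sigma> K * (\<Sum>k<n. measure M (wrong_action k \<inter> stays_above K k))) \<le> 1"
    using c by (simp add: emeasure_eq_measure sum_ennreal ennreal_mult sum_nonneg)
  then have "potential_drop \<sigma> K * (\<Sum>k<n. measure M (wrong_action k \<inter> stays_above K k)) \<le> 1"
    by (simp add: ennreal_le_1)
  then show ?thesis using c by (simp add: field_simps)
qed

lemma emeasure_ell_ever_below_le:
  assumes K: "K > 0" shows "emeasure M {\<omega> \<in> space M. \<exists>n. ell n \<omega> \<le> -K} \<le> ennreal (exp (-K / 2))"
proof -
  have "{\<omega> \<in> space M. \<exists>n. ell n \<omega> \<le> -K} = (\<Union>n. space M - stays_above K n)"
    unfolding stays_above_def by (auto simp: not_less) (metis order.refl not_le)
  moreover have "emeasure M (\<Union>n. space M - stays_above K n) = (SUP n. emeasure M (space M - stays_above K n))"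
    using stays_above_Suc_subset by (intro SUP_emeasure_incseq[symmetric] incseq_SucI) auto
  moreover have "(SUP n. emeasure M (space M - stays_above K n)) \<le> ennreal (exp (-K / 2))"
    by (rule SUP_least) (rule emeasure_not_stays_above_le[OF K])
  ultimately show ?thesis by simp
qed

lemma AE_eventually_right_action_if_bounded_below:
  assumes K: "K > 0"
  shows "AE \<omega> in M. (\<forall>n. -K < ell n \<omega>) \<longrightarrow> eventually (\<lambda>n. \<omega> \<notin> wrong_action n) sequentially"
proof -
  have "limsup (\<lambda>n. wrong_action n \<inter> stays_above K n) \<in> null_sets M"
  proof (rule borel_cantelli_limsup1)
    show "summable (\<lambda>n. measure M (wrong_action n \<inter> stays_above K n))"
      by (rule summableI_nonneg_bounded[where x="1 / potential_drop \<sigma> K"])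
        (auto intro: sum_measure_wrong_action_le[OF K])
  qed (auto simp: emeasure_eq_measure)
  then show ?thesis
  proof (rule AE_I')
    show "{\<omega> \<in> space M. \<not> ((\<forall>n. -K < ell n \<omega>) \<longrightarrow> eventually (\<lambda>n. \<omega> \<notin> wrong_action n) sequentially)}
        \<subseteq> limsup (\<lambda>n. wrong_action n \<inter> stays_above K n)"
      by (auto simp: limsup_INF_SUP eventually_sequentially stays_above_def not_le) (meson atLeast_iff)
  qed
qed

lemma AE_ell_bounded_below: "AE \<omega> in M. \<exists>k::nat. \<forall>n. -real (Suc k) < ell n \<omega>"
proof (rule AE_I')
  define N where "N = (\<Inter>k. {\<omega> \<in> space M. \<exists>n. ell n \<omega> \<le> -real (Suc k)})"
  have N_le: "emeasure M N \<le> ennreal (exp (-real (Suc k) / 2))" for k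
    using emeasure_mono[of N "{\<omega> \<in> space M. \<exists>n. ell n \<omega> \<le> -real (Suc k)}" M]
      emeasure_ell_ever_below_le[of "real (Suc k)"] unfolding N_def by (auto intro: order_trans)
  have "(\<lambda>k. ennreal (exp (-real (Suc k) / 2))) \<longlonglongrightarrow> ennreal 0"
    by (intro tendsto_ennrealI) real_asymp
  then have "emeasure M N \<le> ennreal 0" by (rule LIMSEQ_le_const) (use N_le in auto)
  moreover have "N \<in> sets M" unfolding N_def by measurable
  ultimately show "N \<in> null_sets M" by (simp add: null_sets_def)
  show "{\<omega> \<in> space M. \<not> (\<exists>k::nat. \<forall>n. -real (Suc k) < ell n \<omega>)} \<subseteq> N"
    unfolding N_def by (auto simp: not_less)
qed

lemma AE_eventually_right_action:
  "AE \<omega> in M. eventually (\<lambda>n. signal_threshold \<sigma> (ell n \<omega>) < s n \<omega>) sequentially"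
proof -
  have "AE \<omega> in M. \<forall>k::nat. (\<forall>n. -real (Suc k) < ell n \<omega>)
      \<longrightarrow> eventually (\<lambda>n. \<omega> \<notin> wrong_action n) sequentially"
    by (subst AE_all_countable) (rule allI, rule AE_eventually_right_action_if_bounded_below, simp)
  with AE_ell_bounded_below AE_space show ?thesis
    by eventually_elim (auto simp: wrong_action_def not_le)
qed

theorem AE_public_llr_asymptotics:
  "AE \<omega> in M. (\<lambda>t. public_llr \<sigma> (\<lambda>n. s n \<omega>) t / ((2 * sqrt 2 / \<sigma>) * sqrt (ln (real t)))) \<longlonglongrightarrow> 1"
  using AE_eventually_right_action
proof eventually_elim
  case (elim \<omega>)
  then obtain T where "\<And>n. n \<ge> T \<Longrightarrow> signal_threshold \<sigma> (ell n \<omega>) < s n \<omega>"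
    unfolding eventually_sequentially by blast
  then have "\<And>n. n \<ge> T \<Longrightarrow> ell (Suc n) \<omega> = ell n \<omega> + D_plus \<sigma> (ell n \<omega>)"
    by (simp add: ell_Suc next_llr_gaussian[OF sigma_pos])
  then have "(\<lambda>t. ell (t - 1) \<omega> / ((2 * sqrt 2 / \<sigma>) * sqrt (ln (real t)))) \<longlonglongrightarrow> 1"
    by (intro D_plus_recursion_asymptotics[where x="\<lambda>n. ell n \<omega>" and T=T, OF sigma_pos])
  then show ?case by (simp add: public_llr_def ell_def)
qed

end

theorem theorem4:
  fixes M :: "'a measure" and s :: "nat \<Rightarrow> 'a \<Rightarrow> real" and \<sigma> :: real
  assumes "prob_space M"
    and "\<sigma> > 0"
    and "prob_space.indep_vars M (\<lambda>_. borel) s UNIV"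
    and "\<And>n. distributed M lborel (s n) (\<lambda>x. ennreal (sig_density \<sigma> 1 x))"
  shows "AE \<omega> in M.
    (\<lambda>t. public_llr \<sigma> (\<lambda>n. s n \<omega>) t / ((2 * sqrt 2 / \<sigma>) * sqrt (ln (real t))))
      \<longlonglongrightarrow> 1"
proof -
  interpret gaussian_social_learning M s \<sigma>
    using assms unfolding gaussian_social_learning_def gaussian_social_learning_axioms_def by blast
  show ?thesis by (rule AE_public_llr_asymptotics)
qed

end
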